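(* Let $a,b,c,d>0$ and $\varphi(x_1,x_2)=\max(ax_1,-cx_1)+\max(bx_2,-dx_2)$, i.e. $\varphi=ax_1+bx_2$ for $x_1>0,x_2>0$; $-cx_1+bx_2$ for $x_1<0,x_2>0$; $-cx_1-dx_2$ for $x_1<0,x_2<0$; $ax_1-dx_2$ for $x_1>0,x_2<0$. Let $(T_\varphi u)(x)=u(x_1,x_2,x_3-\varphi(x_1,x_2))$ and $V_\varphi=FT_\varphi F^{-1}$, where $F$ is the Fourier transform $\tilde u(\xi)=(Fu)(\xi)=\int_{\mathbb R^3}e^{ix\cdot\xi}u(x)\,dx$. Then for every $u$ in the Schwartz space $S(\mathbb R^3)$, $$(V_\varphi\tilde u)(\xi)=(P_1P_2\tilde u)(\xi_1+a\xi_3,\xi_2+b\xi_3,\xi_3)+(Q_1P_2\tilde u)(\xi_1-c\xi_3,\xi_2+b\xi_3,\xi_3)$$ $$+(Q_1Q_2\tilde u)(\xi_1-c\xi_3,\xi_2-d\xi_3,\xi_3)+(P_1Q_2\tilde u)(\xi_1+a\xi_3,\xi_2-d\xi_3,\xi_3),$$ where (e.g.) $(P_1P_2\tilde u)(\xi_1+a\xi_3,\xi_2+b\xi_3,\xi_3)$ means the function $P_1P_2\tilde u$ evaluated at the point $(\xi_1+a\xi_3,\xi_2+b\xi_3,\xi_3)$.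
   Context: $P_k=\frac12(I+S_k)$, $Q_k=\frac12(I-S_k)$, $k=1,2$, where $I$ is the identity and $S_k$ are the one-dimensional singular integral operators $$(S_1\tilde u)(\xi_1,\xi_2,\xi_3)=\frac{i}{\pi}\,\mathrm{v.p.}\int_{-\infty}^{+\infty}\frac{\tilde u(\eta,\xi_2,\xi_3)}{\xi_1-\eta}\,d\eta,\qquad (S_2\tilde u)(\xi_1,\xi_2,\xi_3)=\frac{i}{\pi}\,\mathrm{v.p.}\int_{-\infty}^{+\infty}\frac{\tilde u(\xi_1,\eta,\xi_3)}{\xi_2-\eta}\,d\eta.$$ *)

theory Defs
  imports "HOL-Analysis.Analysis"
begin

type_synonym R3 = "real ^ 3"

definition pdiff :: "3 \<Rightarrow> (R3 \<Rightarrow> complex) \<Rightarrow> R3 \<Rightarrow> complex" where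
  "pdiff j f x = vector_derivative (\<lambda>t. f (x + t *\<^sub>R axis j 1)) (at 0)"

fun pdiffs :: "3 list \<Rightarrow> (R3 \<Rightarrow> complex) \<Rightarrow> R3 \<Rightarrow> complex" where
  "pdiffs [] f = f"
| "pdiffs (j # js) f = pdiff j (pdiffs js f)"

definition schwartz :: "(R3 \<Rightarrow> complex) \<Rightarrow> bool" where
  "schwartz u \<longleftrightarrow>
     (\<forall>js j x. (\<lambda>t. pdiffs js u (x + t *\<^sub>R axis j 1)) differentiable (at 0)) \<and>
     (\<forall>js. continuous_on UNIV (pdiffs js u)) \<and>
     (\<forall>js (N::nat). \<exists>C. \<forall>x. (1 + norm x) ^ N * norm (pdiffs js u x) \<le> C)"

definition fourier :: "(R3 \<Rightarrow> complex) \<Rightarrow> R3 \<Rightarrow> complex" where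
  "fourier u \<xi> = (\<integral>x. exp (\<i> * complex_of_real (x \<bullet> \<xi>)) * u x \<partial>lborel)"

definition fourier_inv :: "(R3 \<Rightarrow> complex) \<Rightarrow> R3 \<Rightarrow> complex" where
  "fourier_inv v x = complex_of_real ((2 * pi) powr (-3)) *
      (\<integral>\<xi>. exp (- \<i> * complex_of_real (x \<bullet> \<xi>)) * v \<xi> \<partial>lborel)"

definition pv_integral :: "(real \<Rightarrow> complex) \<Rightarrow> real \<Rightarrow> complex" where
  "pv_integral g s = Lim (at_right 0)
     (\<lambda>\<epsilon>. (\<integral>\<eta>. indicator {\<eta>. \<epsilon> < \<bar>s - \<eta>\<bar> \<and> \<bar>s - \<eta>\<bar> < 1 / \<epsilon>} \<eta> *\<^sub>R g \<eta> \<partial>lborel))"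

definition S1 :: "(R3 \<Rightarrow> complex) \<Rightarrow> R3 \<Rightarrow> complex" where
  "S1 v \<xi> = (\<i> / complex_of_real pi) *
     pv_integral (\<lambda>\<eta>. v (vector [\<eta>, \<xi>$2, \<xi>$3]) / complex_of_real (\<xi>$1 - \<eta>)) (\<xi>$1)"

definition S2 :: "(R3 \<Rightarrow> complex) \<Rightarrow> R3 \<Rightarrow> complex" where
  "S2 v \<xi> = (\<i> / complex_of_real pi) *
     pv_integral (\<lambda>\<eta>. v (vector [\<xi>$1, \<eta>, \<xi>$3]) / complex_of_real (\<xi>$2 - \<eta>)) (\<xi>$2)"

definition P1 :: "(R3 \<Rightarrow> complex) \<Rightarrow> R3 \<Rightarrow> complex" where
  "P1 v \<xi> = (v \<xi> + S1 v \<xi>) / 2"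
definition Q1 :: "(R3 \<Rightarrow> complex) \<Rightarrow> R3 \<Rightarrow> complex" where
  "Q1 v \<xi> = (v \<xi> - S1 v \<xi>) / 2"
definition P2 :: "(R3 \<Rightarrow> complex) \<Rightarrow> R3 \<Rightarrow> complex" where
  "P2 v \<xi> = (v \<xi> + S2 v \<xi>) / 2"
definition Q2 :: "(R3 \<Rightarrow> complex) \<Rightarrow> R3 \<Rightarrow> complex" where
  "Q2 v \<xi> = (v \<xi> - S2 v \<xi>) / 2"

definition phi :: "real \<Rightarrow> real \<Rightarrow> real \<Rightarrow> real \<Rightarrow> R3 \<Rightarrow> real" where
  "phi a b c d x = max (a * x$1) (- c * x$1) + max (b * x$2) (- d * x$2)"

definition T_phi :: "real \<Rightarrow> real \<Rightarrow> real \<Rightarrow> real \<Rightarrow> (R3 \<Rightarrow> complex) \<Rightarrow> R3 \<Rightarrow> complex" where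
  "T_phi a b c d u x = u (vector [x$1, x$2, x$3 - phi a b c d x])"

definition V_phi :: "real \<Rightarrow> real \<Rightarrow> real \<Rightarrow> real \<Rightarrow> (R3 \<Rightarrow> complex) \<Rightarrow> R3 \<Rightarrow> complex" where
  "V_phi a b c d v = fourier (T_phi a b c d (fourier_inv v))"

end

(*
  Fourier inversion on the Schwartz space (proved by Gaussian regularisation) gives
  V_phi (F u) = F (T_phi u).  On each quadrant of the (x1, x2)-plane phi is linear, so T_phi u is
  a sum of four pieces  chi(x1, x2) * u (x1, x2, x3 - alpha x1 - beta x2)  with chi the indicator
  of the quadrant, and the Fourier transform turns the shear into the substitution
  xi1 -> xi1 + alpha xi3, xi2 -> xi2 + beta xi3.  It remains to see that P_k and Q_k act on
  Fourier transforms as multiplication by the indicators of x_k > 0 and x_k < 0: by Fubini the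
  truncated principal value integral defining S_k (F g) is the Fourier transform of g times
  -2i (Si (x_k / e) - Si (x_k e)), which tends to -i pi sgn x_k, so S_k (F g) = F (sgn x_k g).
*)
theory Submission
  imports Defs "HOL-Probability.Sinc_Integral" "HOL-Probability.Characteristic_Functions"
    "HOL-Real_Asymp.Real_Asymp"
begin

section \<open>Integration on Euclidean space\<close>

lemma
  fixes f :: "'a::euclidean_space \<Rightarrow> real \<Rightarrow> 'c::{real_normed_field, banach, second_countable_topology}"
  assumes f: "\<And>b. b \<in> Basis \<Longrightarrow> integrable lborel (f b)"
  shows integrable_lborel_prod_Basis: "integrable lborel (\<lambda>x. \<Prod>b\<in>Basis. f b (x \<bullet> b))"
    and integral_lborel_prod_Basis:
      "(\<integral>x. (\<Prod>b\<in>Basis. f b (x \<bullet> b)) \<partial>lborel) = (\<Prod>b\<in>Basis. integral\<^sup>L lborel (f b))"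
proof -
  interpret product_sigma_finite "\<lambda>_. lborel" by standard
  define e where "e y = (\<Sum>b\<in>Basis. y b *\<^sub>R b)" for y :: "'a \<Rightarrow> real"
  have [measurable]: "e \<in> borel_measurable (\<Pi>\<^sub>M b\<in>Basis. lborel)"
    unfolding e_def by measurable
  have [measurable]: "f b \<in> borel_measurable borel" if "b \<in> Basis" for b
    using f[OF that] by auto
  have prod_e: "(\<Prod>b\<in>Basis. f b (e y \<bullet> b)) = (\<Prod>b\<in>Basis. f b (y b))" for y
    by (intro prod.cong refl) (simp add: e_def inner_sum_left inner_Basis if_distrib cong: if_cong)
  have meas: "(\<lambda>x. \<Prod>b\<in>Basis. f b (x \<bullet> b)) \<in> borel_measurable borel"
    by measurable
  have "integrable (\<Pi>\<^sub>M b\<in>Basis. lborel) (\<lambda>y. \<Prod>b\<in>Basis. f b (y b))"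
    by (rule product_integrable_prod) (auto intro: f)
  then show "integrable lborel (\<lambda>x. \<Prod>b\<in>Basis. f b (x \<bullet> b))"
    by (subst lborel_eq) (simp add: integrable_distr_eq meas prod_e)
  have "(\<integral>x. (\<Prod>b\<in>Basis. f b (x \<bullet> b)) \<partial>lborel) = (\<integral>y. (\<Prod>b\<in>Basis. f b (y b)) \<partial>(\<Pi>\<^sub>M b\<in>Basis. lborel))"
    by (subst lborel_eq) (simp add: integral_distr meas prod_e)
  also have "\<dots> = (\<Prod>b\<in>Basis. integral\<^sup>L lborel (f b))"
    by (rule product_integral_prod) (auto intro: f)
  finally show "(\<integral>x. (\<Prod>b\<in>Basis. f b (x \<bullet> b)) \<partial>lborel) = (\<Prod>b\<in>Basis. integral\<^sup>L lborel (f b))" .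
qed

lemma integrable_pair_lborel_mult:
  fixes f :: "'a::euclidean_space \<Rightarrow> 'c::{real_normed_field, banach, second_countable_topology}"
    and g :: "'b::euclidean_space \<Rightarrow> 'c"
  assumes f: "integrable lborel f" and g: "integrable lborel g"
  shows "integrable (lborel \<Otimes>\<^sub>M lborel) (\<lambda>p. f (fst p) * g (snd p))"
proof (rule lborel_pair.Fubini_integrable)
  show "(\<lambda>p. f (fst p) * g (snd p)) \<in> borel_measurable (lborel \<Otimes>\<^sub>M lborel)"
    using f g by measurable
  show "integrable lborel (\<lambda>x. \<integral>y. norm (f (fst (x, y)) * g (snd (x, y))) \<partial>lborel)"
    using f by (simp add: norm_mult)
  show "AE x in lborel. integrable lborel (\<lambda>y. f (fst (x, y)) * g (snd (x, y)))"
    using g by simp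
qed

lemma vec_nth_measurable [measurable]: "(\<lambda>x::real ^ 'n. x $ j) \<in> borel_measurable borel"
  by (intro borel_measurable_continuous_onI continuous_intros)

lemma of_real_measurable [measurable]: "(of_real :: real \<Rightarrow> 'a::real_normed_algebra_1) \<in> borel_measurable borel"
  by (intro borel_measurable_continuous_onI continuous_intros)

lemma integrable_bounded_mult:
  fixes g h :: "'a \<Rightarrow> 'b::{real_normed_field, banach, second_countable_topology}"
  assumes g: "integrable M g" and h: "h \<in> borel_measurable M" "\<And>x. norm (h x) \<le> K"
  shows "integrable M (\<lambda>x. h x * g x)"
proof (rule Bochner_Integration.integrable_bound[of _ "\<lambda>x. K * norm (g x)"])
  show "integrable M (\<lambda>x. K * norm (g x))"
    using g by simp
  show "(\<lambda>x. h x * g x) \<in> borel_measurable M"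
    using h g by measurable
  show "AE x in M. norm (h x * g x) \<le> norm (K * norm (g x))"
    using h(2) by (intro AE_I2) (simp add: norm_mult mult_right_mono abs_ge_self order_trans[OF _ abs_ge_self])
qed

lemma iexp_add: "iexp (a + b) = iexp a * iexp b"
  by (simp add: distrib_left exp_add)

lemma integrable_iexp_mult:
  fixes g :: "'a::euclidean_space \<Rightarrow> complex"
  assumes "integrable lborel g" "\<phi> \<in> borel_measurable borel"
  shows "integrable lborel (\<lambda>x. iexp (\<phi> x) * g x)"
  by (rule integrable_bounded_mult[OF assms(1), of _ 1]) (use assms(2) in \<open>simp_all add: norm_exp_i_times\<close>)

lemma lborel_integrable_affine:
  fixes f :: "'a::euclidean_space \<Rightarrow> 'b::{banach, second_countable_topology}"
  assumes f: "integrable lborel f" and c: "c \<noteq> 0"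
  shows "integrable lborel (\<lambda>x. f (t + c *\<^sub>R x))"
proof -
  have [measurable]: "f \<in> borel_measurable borel"
    using f by auto
  have "(\<integral>\<^sup>+x. ennreal (norm (f x)) \<partial>lborel)
      = ennreal (\<bar>c\<bar> ^ DIM('a)) * (\<integral>\<^sup>+x. ennreal (norm (f (t + c *\<^sub>R x))) \<partial>lborel)"
    by (subst lborel_affine[OF c, of t]) (simp add: nn_integral_density nn_integral_distr nn_integral_cmult)
  then show ?thesis
    using f c unfolding integrable_iff_bounded by (auto simp: ennreal_mult_less_top)
qed

lemma lborel_integral_affine:
  fixes f :: "'a::euclidean_space \<Rightarrow> 'b::{banach, second_countable_topology}"
  assumes c: "c \<noteq> 0"
  shows "(\<integral>x. f x \<partial>lborel) = \<bar>c\<bar> ^ DIM('a) *\<^sub>R (\<integral>x. f (t + c *\<^sub>R x) \<partial>lborel)"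
proof cases
  assume f: "integrable lborel f"
  then have [measurable]: "f \<in> borel_measurable borel"
    by auto
  show ?thesis
    using c lborel_integrable_affine[OF f c, of t]
    by (subst lborel_affine[OF c, of t]) (simp add: integral_density integral_distr)
next
  assume f: "\<not> integrable lborel f"
  have "\<not> integrable lborel (\<lambda>x. f (t + c *\<^sub>R x))"
  proof
    assume "integrable lborel (\<lambda>x. f (t + c *\<^sub>R x))"
    from lborel_integrable_affine[OF this, of "1/c" "- t /\<^sub>R c"] c f show False
      by (simp add: algebra_simps)
  qed
  with f show ?thesis
    by (simp add: not_integrable_integral_eq)
qed

lemma integral_dominated_convergence_at_right_0:
  fixes s :: "real \<Rightarrow> 'a \<Rightarrow> 'b::{banach, second_countable_topology}" and w :: "'a \<Rightarrow> real"
  assumes "f \<in> borel_measurable M" "\<And>e. s e \<in> borel_measurable M" "integrable M w"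
    and lim: "\<And>x. x \<in> space M \<Longrightarrow> ((\<lambda>e. s e x) \<longlongrightarrow> f x) (at_right 0)"
    and bound: "\<And>e x. e > 0 \<Longrightarrow> x \<in> space M \<Longrightarrow> norm (s e x) \<le> w x"
  shows "((\<lambda>e. integral\<^sup>L M (s e)) \<longlongrightarrow> integral\<^sup>L M f) (at_right 0)"
  unfolding filterlim_at_right_to_top
proof (rule integral_dominated_convergence_at_top[where w=w])
  show "AE x in M. ((\<lambda>i. s (inverse i) x) \<longlongrightarrow> f x) at_top"
    using lim by (intro AE_I2) (simp add: filterlim_at_right_to_top)
  show "\<forall>\<^sub>F i in at_top. AE x in M. norm (s (inverse i) x) \<le> w x"
    using eventually_gt_at_top[of 0] by eventually_elim (intro AE_I2 bound, simp_all)
qed (use assms in auto)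

lemma one_plus_square_le:
  fixes a n :: real
  assumes "\<bar>a\<bar> \<le> n"
  shows "1 + a^2 \<le> (1 + n)^2"
proof -
  have "0 \<le> n"
    using assms abs_ge_zero order_trans by blast
  moreover have "a^2 \<le> n^2"
    using power_mono[OF assms abs_ge_zero, of 2] by simp
  ultimately show ?thesis
    by (simp add: power2_eq_square algebra_simps)
qed

definition decay_weight :: "'a::euclidean_space \<Rightarrow> real" where
  "decay_weight x = (\<Prod>b\<in>Basis. inverse (1 + (x \<bullet> b)^2))"

lemma integrable_lborel_inverse_1_plus_square: "integrable lborel (\<lambda>t::real. inverse (1 + t^2))"
  using integrable_inverse_1_plus_square unfolding set_integrable_def by simp

lemma integrable_decay_weight: "integrable lborel decay_weight"
  unfolding decay_weight_def[abs_def]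
  by (rule integrable_lborel_prod_Basis[OF integrable_lborel_inverse_1_plus_square])

lemma decay_weight_lower_bound:
  "inverse ((1 + norm x) ^ (2 * DIM('a))) \<le> decay_weight (x::'a::euclidean_space)"
proof -
  have "1 + (x \<bullet> b)^2 \<le> (1 + norm x)^2" if "b \<in> Basis" for b
    using Basis_le_norm[OF that] by (rule one_plus_square_le)
  then have "(\<Prod>b\<in>Basis. 1 + (x \<bullet> b)^2) \<le> (\<Prod>b\<in>(Basis::'a set). (1 + norm x)^2)"
    by (intro prod_mono) simp
  also have "\<dots> = (1 + norm x) ^ (2 * DIM('a))"
    by (simp add: power_mult)
  finally have "inverse ((1 + norm x) ^ (2 * DIM('a))) \<le> inverse (\<Prod>b\<in>Basis. 1 + (x \<bullet> b)^2)"
    by (intro le_imp_inverse_le prod_pos) (simp_all add: add_pos_nonneg)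
  then show ?thesis
    by (simp add: decay_weight_def prod_inversef[symmetric] comp_def)
qed

lemma integrable_lborel_of_decay:
  fixes f :: "'a::euclidean_space \<Rightarrow> 'b::{banach, second_countable_topology}"
  assumes "f \<in> borel_measurable borel" "\<And>x. (1 + norm x) ^ (2 * DIM('a)) * norm (f x) \<le> C"
  shows "integrable lborel f"
proof (rule Bochner_Integration.integrable_bound[of _ "\<lambda>x. C * decay_weight x"])
  show "integrable lborel (\<lambda>x. C * decay_weight x)"
    by (intro integrable_mult_right integrable_decay_weight)
  show "AE x in lborel. norm (f x) \<le> norm (C * decay_weight x)"
  proof (intro AE_I2)
    fix x :: 'a
    have pos: "(1 + norm x) ^ (2 * DIM('a)) > 0" by (simp add: add_pos_nonneg)
    then have "norm (f x) \<le> C * inverse ((1 + norm x) ^ (2 * DIM('a)))"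
      using assms(2)[of x] by (simp add: field_simps)
    also have "\<dots> \<le> C * decay_weight x"
      using assms(2)[of x] pos decay_weight_lower_bound[of x]
      by (intro mult_left_mono) (auto intro: order_trans[rotated] mult_nonneg_nonneg)
    finally show "norm (f x) \<le> norm (C * decay_weight x)" by simp
  qed
qed (use assms in simp)

section \<open>The Gaussian\<close>

definition gaussian :: "'a::euclidean_space \<Rightarrow> real" where
  "gaussian x = exp (- ((norm x)^2) / 2)"

lemma gaussian_measurable [measurable]: "gaussian \<in> borel_measurable borel"
  unfolding gaussian_def by measurable

lemma gaussian_pos: "gaussian x > 0"
  by (simp add: gaussian_def)

lemma gaussian_le_1: "gaussian x \<le> 1"
  unfolding gaussian_def by (subst exp_le_one_iff) simp

lemma gaussian_0 [simp]: "gaussian 0 = 1"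
  by (simp add: gaussian_def)

lemma continuous_on_gaussian: "continuous_on UNIV gaussian"
  unfolding gaussian_def by (intro continuous_intros) auto

lemma gaussian_real: "gaussian (t::real) = exp (- (t^2) / 2)"
  by (simp add: gaussian_def)

lemma gaussian_eq_prod_Basis: "gaussian x = (\<Prod>b\<in>Basis. gaussian (x \<bullet> b))"
proof -
  have "(norm x)^2 = (\<Sum>b\<in>Basis. (x \<bullet> b)^2)"
    unfolding power2_norm_eq_inner euclidean_inner[of x x] by (simp add: power2_eq_square)
  then show ?thesis
    by (simp add: gaussian_def exp_sum[symmetric] sum_divide_distrib sum_negf)
qed

lemma integrable_gaussian_real: "integrable lborel (gaussian :: real \<Rightarrow> real)"
proof -
  have "integrable lborel (\<lambda>x. sqrt (2*pi) * std_normal_density x)"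
    using integrable_std_normal_moment[of 0] by simp
  also have "(\<lambda>x. sqrt (2*pi) * std_normal_density x) = gaussian"
    by (simp add: fun_eq_iff std_normal_density_def gaussian_real)
  finally show ?thesis .
qed

lemma fourier_gaussian_real:
  "(\<integral>x. complex_of_real (gaussian x) * iexp (t * x) \<partial>lborel) = complex_of_real (sqrt (2*pi) * gaussian t)"
proof -
  have "complex_of_real (gaussian t) = char std_normal_distribution t"
    by (simp add: char_std_normal_distribution gaussian_real)
  also have "\<dots> = (\<integral>x. std_normal_density x *\<^sub>R iexp (t * x) \<partial>lborel)"
    unfolding char_def by (rule integral_density) (auto simp: normal_density_nonneg)
  finally have char: "(\<integral>x. std_normal_density x *\<^sub>R iexp (t * x) \<partial>lborel) = complex_of_real (gaussian t)"
    by simp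
  have "(\<integral>x. complex_of_real (gaussian x) * iexp (t * x) \<partial>lborel)
      = (\<integral>x. complex_of_real (sqrt (2*pi)) * (std_normal_density x *\<^sub>R iexp (t * x)) \<partial>lborel)"
    by (rule Bochner_Integration.integral_cong)
       (auto simp: gaussian_real std_normal_density_def scaleR_conv_of_real)
  also have "\<dots> = complex_of_real (sqrt (2*pi)) * complex_of_real (gaussian t)"
    by (subst integral_mult_right_zero) (simp only: char)
  finally show ?thesis by simp
qed

lemma integrable_gaussian: "integrable lborel (gaussian :: 'a::euclidean_space \<Rightarrow> real)"
proof -
  have "integrable lborel (\<lambda>x::'a. \<Prod>b\<in>Basis. gaussian (x \<bullet> b))"
    by (rule integrable_lborel_prod_Basis[OF integrable_gaussian_real])
  then show ?thesis
    by (simp only: gaussian_eq_prod_Basis[symmetric])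
qed

lemma fourier_gaussian:
  fixes z :: "'a::euclidean_space"
  shows "(\<integral>\<xi>. complex_of_real (gaussian \<xi>) * iexp (z \<bullet> \<xi>) \<partial>lborel)
      = complex_of_real (sqrt (2*pi) ^ DIM('a) * gaussian z)"
proof -
  define h where "h b s = complex_of_real (gaussian s) * iexp ((z \<bullet> b) * s)" for b s
  have integrable_h: "integrable lborel (h b)" for b
  proof (rule Bochner_Integration.integrable_bound[OF integrable_gaussian_real])
    show "h b \<in> borel_measurable lborel" unfolding h_def by measurable
  qed (simp add: h_def norm_mult less_imp_le[OF gaussian_pos])
  have "complex_of_real (gaussian \<xi>) * iexp (z \<bullet> \<xi>) = (\<Prod>b\<in>Basis. h b (\<xi> \<bullet> b))" for \<xi>
  proof -
    have "iexp (z \<bullet> \<xi>) = (\<Prod>b\<in>Basis. iexp ((z \<bullet> b) * (\<xi> \<bullet> b)))"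
      by (simp add: euclidean_inner[of z \<xi>] sum_distrib_left exp_sum[symmetric])
    then show ?thesis
      by (simp add: h_def prod.distrib gaussian_eq_prod_Basis[of \<xi>])
  qed
  then have "(\<integral>\<xi>. complex_of_real (gaussian \<xi>) * iexp (z \<bullet> \<xi>) \<partial>lborel)
      = (\<Prod>b\<in>Basis. integral\<^sup>L lborel (h b))"
    by (simp add: integral_lborel_prod_Basis[OF integrable_h])
  also have "\<dots> = (\<Prod>b\<in>(Basis::'a set). complex_of_real (sqrt (2*pi) * gaussian (z \<bullet> b)))"
    unfolding h_def[abs_def] fourier_gaussian_real ..
  also have "\<dots> = complex_of_real (sqrt (2*pi) ^ DIM('a) * gaussian z)"
    unfolding of_real_prod[symmetric] prod.distrib gaussian_eq_prod_Basis[of z] by simp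
  finally show ?thesis .
qed

lemma fourier_gaussian_scaled:
  fixes v :: "'a::euclidean_space"
  assumes c: "c > 0"
  shows "(\<integral>\<xi>. complex_of_real (gaussian (c *\<^sub>R \<xi>)) * iexp (v \<bullet> \<xi>) \<partial>lborel)
       = complex_of_real ((sqrt (2*pi) / c) ^ DIM('a) * gaussian ((1/c) *\<^sub>R v))"
proof -
  have "(\<integral>\<xi>. complex_of_real (gaussian (c *\<^sub>R \<xi>)) * iexp (v \<bullet> \<xi>) \<partial>lborel)
      = \<bar>1/c\<bar> ^ DIM('a) *\<^sub>R (\<integral>\<zeta>. complex_of_real (gaussian (c *\<^sub>R (0 + (1/c) *\<^sub>R \<zeta>))) *
          iexp (v \<bullet> (0 + (1/c) *\<^sub>R \<zeta>)) \<partial>lborel)"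
    using c by (intro lborel_integral_affine) simp
  also have "(\<lambda>\<zeta>. complex_of_real (gaussian (c *\<^sub>R (0 + (1/c) *\<^sub>R \<zeta>))) * iexp (v \<bullet> (0 + (1/c) *\<^sub>R \<zeta>)))
      = (\<lambda>\<zeta>. complex_of_real (gaussian \<zeta>) * iexp (((1/c) *\<^sub>R v) \<bullet> \<zeta>))"
    using c by (simp add: fun_eq_iff inner_commute)
  also have "(\<integral>\<zeta>. complex_of_real (gaussian \<zeta>) * iexp (((1/c) *\<^sub>R v) \<bullet> \<zeta>) \<partial>lborel)
      = complex_of_real (sqrt (2*pi) ^ DIM('a) * gaussian ((1/c) *\<^sub>R v))"
    by (rule fourier_gaussian)
  finally show ?thesis
    using c by (simp add: scaleR_conv_of_real power_divide)
qed

lemma integral_gaussian_kernel: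
  fixes u :: "'a::euclidean_space \<Rightarrow> complex"
  assumes c: "c > 0"
  shows "(\<integral>y. u y * complex_of_real ((sqrt (2*pi) / c) ^ DIM('a) * gaussian ((1/c) *\<^sub>R (y - x))) \<partial>lborel)
      = complex_of_real (sqrt (2*pi) ^ DIM('a)) * (\<integral>w. u (x + c *\<^sub>R w) * complex_of_real (gaussian w) \<partial>lborel)"
proof -
  have "(\<integral>y. u y * complex_of_real ((sqrt (2*pi) / c) ^ DIM('a) * gaussian ((1/c) *\<^sub>R (y - x))) \<partial>lborel)
      = \<bar>c\<bar> ^ DIM('a) *\<^sub>R (\<integral>w. u (x + c *\<^sub>R w) *
          complex_of_real ((sqrt (2*pi) / c) ^ DIM('a) * gaussian ((1/c) *\<^sub>R ((x + c *\<^sub>R w) - x))) \<partial>lborel)"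
    using c by (intro lborel_integral_affine) simp
  also have "\<dots> = \<bar>c\<bar> ^ DIM('a) *\<^sub>R (\<integral>w. complex_of_real ((sqrt (2*pi) / c) ^ DIM('a)) *
      (u (x + c *\<^sub>R w) * complex_of_real (gaussian w)) \<partial>lborel)"
  proof -
    have "(1/c) *\<^sub>R ((x + c *\<^sub>R w) - x) = w" for w
      using c by simp
    then show ?thesis
      by (simp only: of_real_mult mult.left_commute[of "u _"])
  qed
  also have "\<dots> = complex_of_real (sqrt (2*pi) ^ DIM('a)) * (\<integral>w. u (x + c *\<^sub>R w) * complex_of_real (gaussian w) \<partial>lborel)"
    using c by (simp add: scaleR_conv_of_real power_divide)
  finally show ?thesis .
qed

lemma tendsto_integral_gaussian_damped:
  fixes v :: "'a::euclidean_space \<Rightarrow> complex"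
  assumes int_v: "integrable lborel v"
  shows "((\<lambda>c. \<integral>\<xi>. complex_of_real (gaussian (c *\<^sub>R \<xi>)) * v \<xi> \<partial>lborel) \<longlongrightarrow> integral\<^sup>L lborel v) (at_right 0)"
proof -
  have [measurable]: "v \<in> borel_measurable borel"
    using int_v by auto
  define V where "V c \<xi> = complex_of_real (gaussian (c *\<^sub>R \<xi>)) * v \<xi>" for c \<xi>
  have "isCont (gaussian :: 'a \<Rightarrow> real) z" for z
    using continuous_on_gaussian[where 'a='a] by (simp add: continuous_on_eq_continuous_at)
  then have "((\<lambda>c. gaussian (c *\<^sub>R \<xi>)) \<longlongrightarrow> gaussian (0 *\<^sub>R \<xi>)) (at_right 0)" for \<xi> :: 'a
    by (intro isCont_tendsto_compose[of _ gaussian] tendsto_intros)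
  then have lim_V: "((\<lambda>c. V c \<xi>) \<longlongrightarrow> V 0 \<xi>) (at_right 0)" for \<xi>
    unfolding V_def by (intro tendsto_intros)
  have dominated: "norm (V c \<xi>) \<le> norm (v \<xi>)" for c \<xi>
    using gaussian_le_1[of "c *\<^sub>R \<xi>"] gaussian_pos[of "c *\<^sub>R \<xi>"]
    by (simp add: V_def norm_mult mult_left_le_one_le)
  have "((\<lambda>c. integral\<^sup>L lborel (V c)) \<longlongrightarrow> integral\<^sup>L lborel (V 0)) (at_right 0)"
    by (rule integral_dominated_convergence_at_right_0[OF _ _ _ lim_V dominated])
       (simp_all add: V_def int_v)
  then show ?thesis
    by (simp add: V_def[abs_def])
qed

lemma tendsto_integral_gaussian_mean:
  fixes u :: "'a::euclidean_space \<Rightarrow> complex"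
  assumes cont_u: "continuous_on UNIV u" and bounded_u: "\<And>x. norm (u x) \<le> B"
  shows "((\<lambda>c. \<integral>w. u (x + c *\<^sub>R w) * complex_of_real (gaussian w) \<partial>lborel)
      \<longlongrightarrow> complex_of_real (sqrt (2*pi) ^ DIM('a)) * u x) (at_right 0)"
proof -
  have [measurable]: "u \<in> borel_measurable borel"
    using cont_u by (rule borel_measurable_continuous_onI)
  define F where "F c w = u (x + c *\<^sub>R w) * complex_of_real (gaussian w)" for c w
  have "((\<lambda>c. x + c *\<^sub>R w) \<longlongrightarrow> x + 0 *\<^sub>R w) (at_right 0)" for w
    by (intro tendsto_intros)
  then have "((\<lambda>c. u (x + c *\<^sub>R w)) \<longlongrightarrow> u (x + 0 *\<^sub>R w)) (at_right 0)" for w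
    using cont_u by (auto intro: isCont_tendsto_compose simp: continuous_on_eq_continuous_at)
  then have lim_F: "((\<lambda>c. F c w) \<longlongrightarrow> F 0 w) (at_right 0)" for w
    unfolding F_def by (intro tendsto_intros)
  have dominated: "norm (F c w) \<le> B * gaussian w" for c w
    using bounded_u[of "x + c *\<^sub>R w"] gaussian_pos[of w] by (simp add: F_def norm_mult mult_right_mono)
  have "((\<lambda>c. integral\<^sup>L lborel (F c)) \<longlongrightarrow> integral\<^sup>L lborel (F 0)) (at_right 0)"
    by (rule integral_dominated_convergence_at_right_0[OF _ _ _ lim_F dominated])
       (simp_all add: F_def integrable_gaussian)
  moreover have "integral\<^sup>L lborel (F 0) = complex_of_real (sqrt (2*pi) ^ DIM('a)) * u x"
    using fourier_gaussian[of "0::'a"] by (simp add: F_def[abs_def] mult.commute)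
  ultimately have "((\<lambda>c. integral\<^sup>L lborel (F c)) \<longlongrightarrow> complex_of_real (sqrt (2*pi) ^ DIM('a)) * u x) (at_right 0)"
    by simp
  then show ?thesis
    by (simp only: F_def[abs_def])
qed

section \<open>Lines and shears in R3\<close>

lemma prod_Basis_vec: "(\<Prod>b\<in>(Basis :: (real ^ 'n) set). f b) = (\<Prod>i\<in>UNIV. f (axis i 1))"
proof -
  have "(Basis :: (real ^ 'n) set) = range (\<lambda>i. axis i 1)"
    by (auto simp: Basis_vec_def)
  moreover have "inj (\<lambda>i::'n. axis i (1::real))"
    by (auto intro: injI simp: axis_eq_axis)
  ultimately show ?thesis
    using prod.reindex[of "\<lambda>i. axis i 1" UNIV f] by (simp add: comp_def)
qed

lemma inner_R3: "(x::R3) \<bullet> y = x$1 * y$1 + x$2 * y$2 + x$3 * y$3"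
  by (simp add: inner_vec_def sum_3)

lemma R3_eq_iff: "(x::R3) = y \<longleftrightarrow> x$1 = y$1 \<and> x$2 = y$2 \<and> x$3 = y$3"
  by (simp add: vec_eq_iff forall_3)

lemma UNIV_3_from: "(UNIV :: 3 set) = {j, j + 1, j + 2}"
proof -
  have "card {j, j + 1, j + 2} = CARD(3)"
    by simp
  then show ?thesis
    by (intro card_subset_eq[symmetric]) auto
qed

lemma emeasure_lborel_Times3:
  assumes [measurable]: "A \<in> sets borel" "B \<in> sets borel" "C \<in> sets borel"
  shows "emeasure (lborel :: (real \<times> real \<times> real) measure) (A \<times> B \<times> C)
      = emeasure lborel A * emeasure lborel B * emeasure lborel C"
proof -
  have "emeasure (lborel :: (real \<times> real \<times> real) measure) (A \<times> B \<times> C)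
      = emeasure (lborel \<Otimes>\<^sub>M (lborel \<Otimes>\<^sub>M lborel)) (A \<times> (B \<times> C))"
    by (simp add: lborel_prod)
  also have "\<dots> = emeasure lborel A * (emeasure lborel B * emeasure lborel C)"
    by (simp add: lborel_pair.P.emeasure_pair_measure_Times lborel.emeasure_pair_measure_Times)
  finally show ?thesis by (simp add: mult.assoc)
qed

definition line_chart :: "3 \<Rightarrow> real \<times> real \<times> real \<Rightarrow> R3" where
  "line_chart j = (\<lambda>(t, y, z). t *\<^sub>R axis j 1 + y *\<^sub>R axis (j + 1) 1 + z *\<^sub>R axis (j + 2) 1)"

lemma line_chart_nth:
  "line_chart j (t, p) $ j = t" "line_chart j (t, y, z) $ (j + 1) = y"
  "line_chart j (t, y, z) $ (j + 2) = z"
  by (simp_all add: line_chart_def axis_def split_beta)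

lemma line_chart_measurable [measurable]: "line_chart j \<in> borel_measurable borel"
  unfolding line_chart_def split_beta by (intro borel_measurable_continuous_onI continuous_intros)

lemma line_chart_translate: "line_chart j (t, p) = line_chart j (0, p) + t *\<^sub>R axis j 1"
  by (simp add: line_chart_def split_beta)

lemma lborel_line_chart: "distr lborel borel (line_chart j) = lborel"
proof (rule lborel_eqI[symmetric])
  fix l u :: R3
  assume le_Basis: "\<And>b. b \<in> Basis \<Longrightarrow> l \<bullet> b \<le> u \<bullet> b"
  have le: "l $ i \<le> u $ i" for i
    using le_Basis[of "axis i 1"] by (simp add: cart_eq_inner_axis)
  have forall_3_from: "(\<forall>i. P i) \<longleftrightarrow> P j \<and> P (j + 1) \<and> P (j + 2)" for P :: "3 \<Rightarrow> bool"
  proof -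
    have "(\<forall>i. P i) \<longleftrightarrow> (\<forall>i\<in>{j, j + 1, j + 2}. P i)"
      unfolding UNIV_3_from[of j, symmetric] by simp
    then show ?thesis
      by simp
  qed
  have "line_chart j -` box l u = {l$j<..<u$j} \<times> {l$(j+1)<..<u$(j+1)} \<times> {l$(j+2)<..<u$(j+2)}"
    by (auto simp: mem_box_cart forall_3_from line_chart_nth)
  moreover have "(\<Prod>b\<in>Basis. (u - l) \<bullet> b) = (u$j - l$j) * (u$(j+1) - l$(j+1)) * (u$(j+2) - l$(j+2))"
    unfolding prod_Basis_vec UNIV_3_from[of j] by (simp add: cart_eq_inner_axis[symmetric] mult.assoc)
  ultimately show "emeasure (distr lborel borel (line_chart j)) (box l u) = (\<Prod>b\<in>Basis. (u - l) \<bullet> b)"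
    using le by (simp add: emeasure_distr emeasure_lborel_Times3 ennreal_mult)
qed simp

lemma integral_lborel_line_chart:
  fixes f :: "R3 \<Rightarrow> 'b::{banach, second_countable_topology}"
  assumes f: "integrable lborel f"
  shows "integral\<^sup>L lborel f = (\<integral>p. (\<integral>t. f (line_chart j (t, p)) \<partial>lborel) \<partial>lborel)"
proof -
  have [measurable]: "f \<in> borel_measurable borel"
    using f by auto
  have "integrable (lborel \<Otimes>\<^sub>M lborel) (\<lambda>(t, p). f (line_chart j (t, p)))"
    using f by (subst (asm) lborel_line_chart[symmetric, of j])
      (simp add: integrable_distr_eq lborel_prod case_prod_beta')
  from lborel_pair.integral_snd[OF this]
  have "(\<integral>q. f (line_chart j q) \<partial>(lborel \<Otimes>\<^sub>M lborel))
      = (\<integral>p. (\<integral>t. f (line_chart j (t, p)) \<partial>lborel) \<partial>lborel)"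
    by (simp add: case_prod_beta')
  then show ?thesis
    by (subst lborel_line_chart[symmetric, of j]) (simp add: integral_distr lborel_prod)
qed

lemma nn_integral_lborel_line_chart:
  assumes [measurable]: "f \<in> borel_measurable borel"
  shows "(\<integral>\<^sup>+x. f x \<partial>lborel) = (\<integral>\<^sup>+p. (\<integral>\<^sup>+t. f (line_chart j (t, p)) \<partial>lborel) \<partial>lborel)"
proof -
  have "(\<integral>\<^sup>+x. f x \<partial>lborel) = (\<integral>\<^sup>+q. f (line_chart j q) \<partial>(lborel \<Otimes>\<^sub>M lborel))"
    by (subst lborel_line_chart[symmetric, of j]) (simp add: nn_integral_distr lborel_prod)
  also have "\<dots> = (\<integral>\<^sup>+p. (\<integral>\<^sup>+t. f (line_chart j (t, p)) \<partial>lborel) \<partial>lborel)"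
    by (rule lborel_pair.nn_integral_snd[symmetric]) (simp add: lborel_prod)
  finally show ?thesis .
qed

lemma norm_line_chart_le:
  fixes f :: "R3 \<Rightarrow> 'b::real_normed_vector"
  assumes bound: "\<And>x. (1 + norm x)^6 * norm (f x) \<le> C"
  shows "norm (f (line_chart j (t, p))) \<le> C * inverse (1 + t^2)"
proof -
  define y where "y = line_chart j (t, p)"
  have "\<bar>t\<bar> \<le> norm y"
    using component_le_norm_cart[of y j] by (simp add: y_def line_chart_nth)
  then have "1 + t^2 \<le> (1 + norm y)^2"
    by (rule one_plus_square_le)
  also have "\<dots> \<le> (1 + norm y)^6"
    by (intro power_increasing) auto
  finally have "(1 + t^2) * norm (f y) \<le> C"
    using bound[of y] by (meson mult_right_mono norm_ge_zero order_trans)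
  moreover have "1 + t^2 > 0"
    by (simp add: add_pos_nonneg)
  ultimately show ?thesis
    by (simp add: y_def field_simps)
qed

definition shear :: "real \<Rightarrow> real \<Rightarrow> R3 \<Rightarrow> R3" where
  "shear \<alpha> \<beta> x = x + (\<alpha> * x$1 + \<beta> * x$2) *\<^sub>R axis 3 1"

lemma shear_measurable [measurable]: "shear \<alpha> \<beta> \<in> borel_measurable borel"
  unfolding shear_def by (intro borel_measurable_continuous_onI continuous_intros)

lemma lborel_shear: "distr lborel borel (shear \<alpha> \<beta>) = lborel"
proof (rule measure_eqI)
  fix A :: "R3 set"
  assume "A \<in> sets (distr lborel borel (shear \<alpha> \<beta>))"
  then have [measurable]: "A \<in> sets borel"
    by simp
  have shear_line: "shear \<alpha> \<beta> (line_chart 3 (t, p)) = line_chart 3 ((\<alpha> * fst p + \<beta> * snd p) + 1 * t, p)"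
    for t p
    by (simp add: shear_def line_chart_def split_beta R3_eq_iff axis_def)
  have "emeasure (distr lborel borel (shear \<alpha> \<beta>)) A = emeasure lborel (shear \<alpha> \<beta> -` A)"
    by (simp add: emeasure_distr)
  also have "\<dots> = (\<integral>\<^sup>+x. indicator A (shear \<alpha> \<beta> x) \<partial>lborel)"
    using measurable_sets_borel[OF shear_measurable] by (simp add: indicator_vimage[symmetric])
  also have "\<dots> = (\<integral>\<^sup>+p. (\<integral>\<^sup>+t. indicator A (shear \<alpha> \<beta> (line_chart 3 (t, p))) \<partial>lborel) \<partial>lborel)"
    by (rule nn_integral_lborel_line_chart) simp
  also have "\<dots> = (\<integral>\<^sup>+p. (\<integral>\<^sup>+t. indicator A (line_chart 3 (t, p)) \<partial>lborel) \<partial>lborel)"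
  proof -
    have "(\<integral>\<^sup>+t. indicator A (line_chart 3 (s + 1 * t, p)) \<partial>lborel)
        = (\<integral>\<^sup>+t. indicator A (line_chart 3 (t, p)) \<partial>lborel)" for s p
      using nn_integral_real_affine[of "\<lambda>t. indicator A (line_chart 3 (t, p))" 1 s] by simp
    then show ?thesis
      by (simp only: shear_line)
  qed
  also have "\<dots> = emeasure lborel A"
    by (simp add: nn_integral_lborel_line_chart[symmetric])
  finally show "emeasure (distr lborel borel (shear \<alpha> \<beta>)) A = emeasure lborel A" .
qed simp

lemma integrable_shear:
  fixes g :: "R3 \<Rightarrow> 'b::{banach, second_countable_topology}"
  assumes "integrable lborel g"
  shows "integrable lborel (\<lambda>x. g (shear \<alpha> \<beta> x))"
proof -
  have [measurable]: "g \<in> borel_measurable borel"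
    using assms by auto
  from assms show ?thesis
    using integrable_distr_eq[of "shear \<alpha> \<beta>" lborel borel g] by (simp add: lborel_shear)
qed

section \<open>Elementary properties of the Fourier transform\<close>

lemma fourier_add:
  assumes "integrable lborel f" "integrable lborel g"
  shows "fourier (\<lambda>x. f x + g x) \<xi> = fourier f \<xi> + fourier g \<xi>"
  using integrable_iexp_mult[OF assms(1), of "\<lambda>x. x \<bullet> \<xi>"] integrable_iexp_mult[OF assms(2), of "\<lambda>x. x \<bullet> \<xi>"]
  by (simp add: fourier_def distrib_left)

lemma fourier_cmult: "fourier (\<lambda>x. c * f x) \<xi> = c * fourier f \<xi>"
  unfolding fourier_def by (simp add: mult.left_commute)

lemma norm_fourier_le: "norm (fourier f \<xi>) \<le> (\<integral>x. norm (f x) \<partial>lborel)"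
proof -
  have "norm (fourier f \<xi>) \<le> (\<integral>x. norm (iexp (x \<bullet> \<xi>) * f x) \<partial>lborel)"
    unfolding fourier_def by (rule integral_norm_bound)
  then show ?thesis
    by (simp add: norm_mult norm_exp_i_times)
qed

lemma fourier_measurable [measurable]:
  assumes [measurable]: "f \<in> borel_measurable borel"
  shows "fourier f \<in> borel_measurable borel"
proof -
  have "(\<lambda>(\<xi>, x). iexp (x \<bullet> \<xi>) * f x) \<in> borel_measurable (borel \<Otimes>\<^sub>M lborel)"
    by measurable
  then show ?thesis
    unfolding fourier_def[abs_def] by (rule lborel.borel_measurable_lebesgue_integral)
qed

lemma fourier_shear:
  assumes [measurable]: "g \<in> borel_measurable borel"
  shows "fourier (\<lambda>x. g (shear \<alpha> \<beta> x)) \<xi> = fourier g (vector [\<xi>$1 - \<alpha> * \<xi>$3, \<xi>$2 - \<beta> * \<xi>$3, \<xi>$3])"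
proof -
  have "shear \<alpha> \<beta> (shear (-\<alpha>) (-\<beta>) y) = y" for y
    by (simp add: shear_def R3_eq_iff axis_def)
  moreover have "shear (-\<alpha>) (-\<beta>) y \<bullet> \<xi> = y \<bullet> vector [\<xi>$1 - \<alpha> * \<xi>$3, \<xi>$2 - \<beta> * \<xi>$3, \<xi>$3]" for y
    by (simp add: shear_def inner_R3 axis_def algebra_simps)
  ultimately show ?thesis
    unfolding fourier_def by (subst lborel_shear[symmetric, of "-\<alpha>" "-\<beta>"]) (simp add: integral_distr)
qed

lemma integral_deriv_eq_0:
  fixes h h' :: "real \<Rightarrow> complex"
  assumes deriv: "\<And>t. (h has_vector_derivative h' t) (at t)" and cont: "\<And>t. isCont h' t"
    and int: "integrable lborel h'"
    and lim_top: "(h \<longlongrightarrow> 0) at_top" and lim_bot: "(h \<longlongrightarrow> 0) at_bot"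
  shows "(\<integral>t. h' t \<partial>lborel) = 0"
proof -
  have "(LBINT t=-\<infinity>..\<infinity>. h' t) = 0 - 0"
  proof (rule interval_integral_FTC_integrable[where F = h])
    show "set_integrable lborel (einterval (-\<infinity>) \<infinity>) h'"
      using int by (simp add: set_integrable_def)
    show "((h \<circ> real_of_ereal) \<longlongrightarrow> 0) (at_right (-\<infinity>))" "((h \<circ> real_of_ereal) \<longlongrightarrow> 0) (at_left \<infinity>)"
      using lim_top lim_bot by (simp_all add: ereal_tendsto_simps1)
  qed (auto simp: deriv cont)
  then show ?thesis
    by (simp add: interval_lebesgue_integral_def set_lebesgue_integral_def)
qed

lemma integral_iexp_mult_deriv:
  fixes G G' :: "real \<Rightarrow> complex"
  assumes D: "\<And>t. (G has_vector_derivative G' t) (at t)"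
    and cont_G': "continuous_on UNIV G'"
    and int_G: "integrable lborel G" and int_G': "integrable lborel G'"
    and lim_top: "(G \<longlongrightarrow> 0) at_top" and lim_bot: "(G \<longlongrightarrow> 0) at_bot"
  shows "(\<integral>t. iexp (t * w) * G' t \<partial>lborel) = - \<i> * of_real w * (\<integral>t. iexp (t * w) * G t \<partial>lborel)"
proof -
  define h where "h t = iexp (t * w) * G t" for t
  define h' where "h' t = iexp (t * w) * G' t + \<i> * of_real w * iexp (t * w) * G t" for t
  have deriv_iexp: "((\<lambda>t. iexp (t * w)) has_vector_derivative (\<i> * of_real w * iexp (t * w))) (at t)" for t
  proof -
    have "((\<lambda>z. exp ((\<i> * of_real w) * z)) has_field_derivative
        (exp ((\<i> * of_real w) * of_real t) * (\<i> * of_real w))) (at (of_real t))"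
      by (auto intro!: derivative_eq_intros)
    from has_vector_derivative_real_field[OF this] show ?thesis
      by (simp add: mult_ac)
  qed
  have "continuous_on UNIV G"
    using D by (intro continuous_on_vector_derivative) (auto intro: has_vector_derivative_at_within)
  then have cont_h': "isCont h' t" for t
    unfolding h'_def using cont_G' by (intro continuous_intros) (auto simp: continuous_on_eq_continuous_at)
  have int1: "integrable lborel (\<lambda>t. iexp (t * w) * G' t)"
    by (rule integrable_iexp_mult[OF int_G']) simp
  have int2: "integrable lborel (\<lambda>t. iexp (t * w) * G t)"
    by (rule integrable_iexp_mult[OF int_G]) simp
  have "(\<lambda>t. norm (h t)) = (\<lambda>t. norm (G t))"
    by (simp add: h_def norm_mult norm_exp_i_times)
  then have "((\<lambda>t. norm (h t)) \<longlongrightarrow> 0) at_top" "((\<lambda>t. norm (h t)) \<longlongrightarrow> 0) at_bot"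
    using tendsto_norm_zero[OF lim_top] tendsto_norm_zero[OF lim_bot] by auto
  then have "(h \<longlongrightarrow> 0) at_top \<and> (h \<longlongrightarrow> 0) at_bot"
    by (simp only: tendsto_norm_zero_iff)
  moreover have "(h has_vector_derivative h' t) (at t)" for t
    using has_vector_derivative_mult[OF deriv_iexp D[of t]] unfolding h_def[abs_def] h'_def by simp
  moreover have "integrable lborel h'"
    unfolding h'_def using int1 int2 by (simp add: mult.assoc)
  ultimately have "(\<integral>t. h' t \<partial>lborel) = 0"
    using cont_h' by (intro integral_deriv_eq_0[where h = h]) auto
  then have "(\<integral>t. iexp (t * w) * G' t \<partial>lborel) + \<i> * of_real w * (\<integral>t. iexp (t * w) * G t \<partial>lborel) = 0"
    unfolding h'_def using int1 int2 by (simp add: mult.assoc)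
  then show ?thesis
    by (simp only: add_eq_0_iff2 minus_mult_left)
qed

lemma integral_iexp_mult_deriv_line_chart:
  fixes f g :: "R3 \<Rightarrow> complex"
  assumes D: "\<And>x t. ((\<lambda>s. f (x + s *\<^sub>R axis j 1)) has_vector_derivative g (x + t *\<^sub>R axis j 1)) (at t)"
    and cont_f: "continuous_on UNIV f" and cont_g: "continuous_on UNIV g"
    and bound_f: "\<And>x. (1 + norm x)^6 * norm (f x) \<le> C"
    and bound_g: "\<And>x. (1 + norm x)^6 * norm (g x) \<le> C"
  shows "(\<integral>t. iexp (t * w) * g (line_chart j (t, p)) \<partial>lborel)
      = - \<i> * of_real w * (\<integral>t. iexp (t * w) * f (line_chart j (t, p)) \<partial>lborel)"
proof -
  have meas [measurable]: "f \<in> borel_measurable borel" "g \<in> borel_measurable borel"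
    using cont_f cont_g by (auto intro: borel_measurable_continuous_onI)
  have int_line: "integrable lborel (\<lambda>t. h (line_chart j (t, p)))"
    if "\<And>x. (1 + norm x)^6 * norm (h x) \<le> C" "h \<in> borel_measurable borel" for h :: "R3 \<Rightarrow> complex"
  proof (rule Bochner_Integration.integrable_bound)
    show "integrable lborel (\<lambda>t. C * inverse (1 + t^2))"
      using integrable_lborel_inverse_1_plus_square by simp
    show "(\<lambda>t. h (line_chart j (t, p))) \<in> borel_measurable lborel"
      using that(2) by measurable
    show "AE t in lborel. norm (h (line_chart j (t, p))) \<le> norm (C * inverse (1 + t^2))"
      using order_trans[OF norm_line_chart_le[OF that(1)] abs_ge_self] by (intro AE_I2) simp
  qed
  define x where "x = line_chart j (0, p)"
  have chart: "line_chart j (t, p) = x + t *\<^sub>R axis j 1" for t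
    unfolding x_def by (rule line_chart_translate)
  have "((\<lambda>t. inverse (1 + t^2)) \<longlongrightarrow> (0::real)) at_top" "((\<lambda>t. inverse (1 + t^2)) \<longlongrightarrow> (0::real)) at_bot"
    by real_asymp+
  then have decay: "((\<lambda>t. C * inverse (1 + t^2)) \<longlongrightarrow> 0) at_top" "((\<lambda>t. C * inverse (1 + t^2)) \<longlongrightarrow> 0) at_bot"
    by (simp_all add: tendsto_mult_right_zero)
  have bound_line: "\<forall>t. norm (f (line_chart j (t, p))) \<le> C * inverse (1 + t^2)"
    using norm_line_chart_le[OF bound_f] by blast
  have lim_top: "((\<lambda>t. f (line_chart j (t, p))) \<longlongrightarrow> 0) at_top"
    by (rule Lim_null_comparison[OF always_eventually[OF bound_line] decay(1)])
  have lim_bot: "((\<lambda>t. f (line_chart j (t, p))) \<longlongrightarrow> 0) at_bot"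
    by (rule Lim_null_comparison[OF always_eventually[OF bound_line] decay(2)])
  have cont_line: "continuous_on UNIV (\<lambda>t. g (line_chart j (t, p)))"
    unfolding chart by (intro continuous_on_compose2[OF cont_g] continuous_intros) auto
  have D_line: "((\<lambda>t. f (line_chart j (t, p))) has_vector_derivative g (line_chart j (t, p))) (at t)" for t
    unfolding chart by (rule D)
  show ?thesis
    by (rule integral_iexp_mult_deriv[OF D_line cont_line int_line[OF bound_f meas(1)]
          int_line[OF bound_g meas(2)] lim_top lim_bot])
qed

lemma fourier_deriv_along_axis:
  fixes f g :: "R3 \<Rightarrow> complex"
  assumes D: "\<And>x t. ((\<lambda>s. f (x + s *\<^sub>R axis j 1)) has_vector_derivative g (x + t *\<^sub>R axis j 1)) (at t)"
    and cont_f: "continuous_on UNIV f" and cont_g: "continuous_on UNIV g"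
    and bound_f: "\<And>x. (1 + norm x)^6 * norm (f x) \<le> C"
    and bound_g: "\<And>x. (1 + norm x)^6 * norm (g x) \<le> C"
  shows "fourier g \<xi> = - \<i> * of_real (\<xi>$j) * fourier f \<xi>"
proof -
  have [measurable]: "f \<in> borel_measurable borel" "g \<in> borel_measurable borel"
    using cont_f cont_g by (auto intro: borel_measurable_continuous_onI)
  have "integrable lborel f" "integrable lborel g"
    using bound_f bound_g by (auto intro!: integrable_lborel_of_decay[where C=C])
  then have int: "integrable lborel (\<lambda>x. iexp (x \<bullet> \<xi>) * f x)" "integrable lborel (\<lambda>x. iexp (x \<bullet> \<xi>) * g x)"
    by (auto intro!: integrable_iexp_mult)
  have line: "(\<integral>t. iexp (line_chart j (t, p) \<bullet> \<xi>) * g (line_chart j (t, p)) \<partial>lborel)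
      = - \<i> * of_real (\<xi>$j) * (\<integral>t. iexp (line_chart j (t, p) \<bullet> \<xi>) * f (line_chart j (t, p)) \<partial>lborel)"
    for p
  proof -
    define c where "c = iexp (line_chart j (0, p) \<bullet> \<xi>)"
    have inner: "line_chart j (t, p) \<bullet> \<xi> = line_chart j (0, p) \<bullet> \<xi> + t * \<xi>$j" for t
      by (subst line_chart_translate) (simp add: inner_add_left inner_axis')
    have phase: "iexp (line_chart j (t, p) \<bullet> \<xi>) = c * iexp (t * \<xi>$j)" for t
      unfolding c_def inner[of t] by (rule iexp_add)
    have "(\<integral>t. iexp (line_chart j (t, p) \<bullet> \<xi>) * g (line_chart j (t, p)) \<partial>lborel)
        = c * (\<integral>t. iexp (t * \<xi>$j) * g (line_chart j (t, p)) \<partial>lborel)"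
      by (simp add: phase mult.assoc)
    also have "\<dots> = c * (- \<i> * of_real (\<xi>$j) * (\<integral>t. iexp (t * \<xi>$j) * f (line_chart j (t, p)) \<partial>lborel))"
      by (simp only: integral_iexp_mult_deriv_line_chart[OF D cont_f cont_g bound_f bound_g])
    also have "\<dots> = - \<i> * of_real (\<xi>$j) * (\<integral>t. iexp (line_chart j (t, p) \<bullet> \<xi>) * f (line_chart j (t, p)) \<partial>lborel)"
      by (simp add: phase mult.assoc mult.left_commute)
    finally show ?thesis .
  qed
  have "fourier g \<xi> = (\<integral>p. (\<integral>t. iexp (line_chart j (t, p) \<bullet> \<xi>) * g (line_chart j (t, p)) \<partial>lborel) \<partial>lborel)"
    unfolding fourier_def by (rule integral_lborel_line_chart[OF int(2)])
  also have "\<dots> = - \<i> * of_real (\<xi>$j) *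
      (\<integral>p. (\<integral>t. iexp (line_chart j (t, p) \<bullet> \<xi>) * f (line_chart j (t, p)) \<partial>lborel) \<partial>lborel)"
    by (simp add: line)
  also have "\<dots> = - \<i> * of_real (\<xi>$j) * fourier f \<xi>"
    unfolding fourier_def integral_lborel_line_chart[OF int(1), of j] ..
  finally show ?thesis .
qed

section \<open>Schwartz functions and Fourier inversion\<close>

lemma schwartz_continuous: "schwartz u \<Longrightarrow> continuous_on UNIV (pdiffs js u)"
  unfolding schwartz_def by blast

lemma schwartz_measurable: "schwartz u \<Longrightarrow> pdiffs js u \<in> borel_measurable borel"
  using schwartz_continuous by (rule borel_measurable_continuous_onI)

lemma schwartz_decay: "schwartz u \<Longrightarrow> \<exists>C. \<forall>x. (1 + norm x) ^ N * norm (pdiffs js u x) \<le> C"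
  unfolding schwartz_def by blast

lemma schwartz_integrable:
  assumes "schwartz u"
  shows "integrable lborel (pdiffs js u)"
proof -
  obtain C where "\<And>x. (1 + norm x) ^ (2 * DIM(R3)) * norm (pdiffs js u x) \<le> C"
    using schwartz_decay[OF assms] by blast
  then show ?thesis
    by (rule integrable_lborel_of_decay[OF schwartz_measurable[OF assms]])
qed

lemma schwartz_has_vector_derivative:
  assumes "schwartz u"
  shows "((\<lambda>s. pdiffs js u (x + s *\<^sub>R axis j 1)) has_vector_derivative pdiffs (j # js) u (x + t *\<^sub>R axis j 1)) (at t)"
proof -
  define y where "y = x + t *\<^sub>R axis j 1"
  define \<phi> where "\<phi> h = pdiffs js u (y + h *\<^sub>R axis j 1)" for h
  have "\<phi> differentiable (at 0)"
    using assms unfolding schwartz_def \<phi>_def by blast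
  then have "(\<phi> has_vector_derivative pdiffs (j # js) u y) (at 0)"
    unfolding vector_derivative_works by (simp add: pdiff_def \<phi>_def[abs_def])
  then have "((\<phi> \<circ> (\<lambda>s. s - t)) has_vector_derivative pdiffs (j # js) u y) (at t)"
    by (intro vector_diff_chain_at[where f' = 1, simplified]) (auto intro!: derivative_eq_intros)
  moreover have "\<phi> \<circ> (\<lambda>s. s - t) = (\<lambda>s. pdiffs js u (x + s *\<^sub>R axis j 1))"
    by (simp add: fun_eq_iff \<phi>_def y_def algebra_simps)
  ultimately show ?thesis
    by (simp add: y_def)
qed

lemma fourier_pdiffs_Cons:
  assumes "schwartz u"
  shows "fourier (pdiffs (j # js) u) \<xi> = - \<i> * of_real (\<xi>$j) * fourier (pdiffs js u) \<xi>"
proof -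
  obtain C1 where C1: "\<And>x. (1 + norm x)^6 * norm (pdiffs js u x) \<le> C1"
    using schwartz_decay[OF assms] by blast
  obtain C2 where C2: "\<And>x. (1 + norm x)^6 * norm (pdiffs (j # js) u x) \<le> C2"
    using schwartz_decay[OF assms] by blast
  show ?thesis
  proof (rule fourier_deriv_along_axis[where C = "max C1 C2"])
    show "(1 + norm x)^6 * norm (pdiffs js u x) \<le> max C1 C2"
      "(1 + norm x)^6 * norm (pdiffs (j # js) u x) \<le> max C1 C2" for x
      using C1[of x] C2[of x] by linarith+
  qed (use schwartz_has_vector_derivative[OF assms] schwartz_continuous[OF assms, of js]
      schwartz_continuous[OF assms, of "j # js"] in auto)
qed

lemma fourier_pdiffs:
  assumes "schwartz u"
  shows "fourier (pdiffs js u) \<xi> = (\<Prod>j\<leftarrow>js. - \<i> * of_real (\<xi>$j)) * fourier u \<xi>"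
  by (induction js) (simp_all add: fourier_pdiffs_Cons[OF assms, simplified] mult.assoc)

lemma norm_fourier_pdiffs_le:
  assumes "schwartz u"
  shows "norm (\<Prod>j\<leftarrow>js. - \<i> * of_real (\<xi>$j)) * norm (fourier u \<xi>) \<le> (\<integral>x. norm (pdiffs js u x) \<partial>lborel)"
  using norm_fourier_le[of "pdiffs js u" \<xi>] by (simp add: fourier_pdiffs[OF assms] norm_mult)

text \<open>Differentiating twice in each direction of a set \<open>S\<close> of coordinates gives the
  factor \<open>\<Prod>i\<in>S. \<xi>$i ^ 2\<close>; summing over all \<open>S\<close> yields \<open>\<Prod>i. 1 + \<xi>$i ^ 2\<close>.\<close>

lemma fourier_schwartz_decay:
  assumes "schwartz u"
  shows "\<exists>K. \<forall>\<xi>. (\<Prod>i\<in>UNIV. 1 + (\<xi>$i)^2) * norm (fourier u \<xi>) \<le> K"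
proof -
  define js where "js S = concat (map (\<lambda>i. [i, i]) (sorted_list_of_set S))" for S :: "3 set"
  have norm_prod: "norm (\<Prod>j\<leftarrow>js S. - \<i> * of_real (\<xi>$j)) = (\<Prod>i\<in>S. (\<xi>$i)^2)" for S \<xi>
  proof -
    have "norm (\<Prod>j\<leftarrow>concat (map (\<lambda>i. [i, i]) xs). - \<i> * of_real (\<xi>$j)) = (\<Prod>i\<leftarrow>xs. (\<xi>$i)^2)"
      for xs :: "3 list"
      by (induction xs) (simp_all add: norm_mult power2_eq_square abs_mult_self_eq)
    then show ?thesis
      by (simp add: js_def prod.distinct_set_conv_list[symmetric])
  qed
  define K where "K = (\<Sum>S\<in>Pow UNIV. \<integral>x. norm (pdiffs (js S) u x) \<partial>lborel)"
  have "(\<Prod>i\<in>UNIV. 1 + (\<xi>$i)^2) * norm (fourier u \<xi>) \<le> K" for \<xi>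
  proof -
    have "(\<Prod>i\<in>UNIV. 1 + (\<xi>$i)^2) * norm (fourier u \<xi>)
        = (\<Sum>S\<in>Pow UNIV. \<Prod>i\<in>S. (\<xi>$i)^2) * norm (fourier u \<xi>)"
      using prod_add[of UNIV "\<lambda>i. (\<xi>$i)^2" "\<lambda>_. 1"] by (simp add: add.commute)
    also have "\<dots> = (\<Sum>S\<in>Pow UNIV. norm (\<Prod>j\<leftarrow>js S. - \<i> * of_real (\<xi>$j)) * norm (fourier u \<xi>))"
      by (simp only: norm_prod sum_distrib_right)
    also have "\<dots> \<le> K"
      unfolding K_def by (intro sum_mono norm_fourier_pdiffs_le[OF assms])
    finally show ?thesis .
  qed
  then show ?thesis
    by blast
qed

lemma integrable_fourier_schwartz:
  assumes "schwartz u"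
  shows "integrable lborel (fourier u)"
proof -
  obtain K where K: "\<And>\<xi>. (\<Prod>i\<in>UNIV. 1 + (\<xi>$i)^2) * norm (fourier u \<xi>) \<le> K"
    using fourier_schwartz_decay[OF assms] by blast
  have weight: "decay_weight \<xi> = inverse (\<Prod>i\<in>UNIV. 1 + (\<xi>$i)^2)" for \<xi> :: R3
    by (simp add: decay_weight_def prod_Basis_vec cart_eq_inner_axis prod_inversef[symmetric] comp_def)
  show ?thesis
  proof (rule Bochner_Integration.integrable_bound[of _ "\<lambda>\<xi>. K * decay_weight \<xi>"])
    show "integrable lborel (\<lambda>\<xi>. K * decay_weight \<xi>)"
      by (intro integrable_mult_right integrable_decay_weight)
    show "fourier u \<in> borel_measurable lborel"
      using schwartz_measurable[OF assms, of "[]"] by simp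
    show "AE \<xi> in lborel. norm (fourier u \<xi>) \<le> norm (K * decay_weight \<xi>)"
    proof (intro AE_I2)
      fix \<xi> :: R3
      have pos: "(\<Prod>i\<in>UNIV. 1 + (\<xi>$i)^2) > 0"
        by (intro prod_pos) (simp add: add_pos_nonneg)
      then have "norm (fourier u \<xi>) \<le> K * decay_weight \<xi>"
        using K[of \<xi>] by (simp add: weight field_simps)
      then show "norm (fourier u \<xi>) \<le> norm (K * decay_weight \<xi>)"
        by simp
    qed
  qed
qed

lemma fourier_inv_gaussian_regularized:
  fixes u :: "R3 \<Rightarrow> complex"
  assumes int_u: "integrable lborel u" and c: "c > 0"
  shows "(\<integral>\<xi>. complex_of_real (gaussian (c *\<^sub>R \<xi>)) * (iexp (- (x \<bullet> \<xi>)) * fourier u \<xi>) \<partial>lborel)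
      = complex_of_real (sqrt (2*pi) ^ 3) * (\<integral>w. u (x + c *\<^sub>R w) * complex_of_real (gaussian w) \<partial>lborel)"
proof -
  have [measurable]: "u \<in> borel_measurable borel"
    using int_u by auto
  define K where "K \<xi> y = complex_of_real (gaussian (c *\<^sub>R \<xi>)) * iexp (- (x \<bullet> \<xi>)) * (iexp (y \<bullet> \<xi>) * u y)"
    for \<xi> y
  have int_K: "integrable (lborel \<Otimes>\<^sub>M lborel) (\<lambda>(\<xi>, y). K \<xi> y)"
  proof (rule Bochner_Integration.integrable_bound)
    show "integrable (lborel \<Otimes>\<^sub>M lborel) (\<lambda>p. gaussian (0 + c *\<^sub>R fst p) * norm (u (snd p)))"
      using c integrable_pair_lborel_mult[OF lborel_integrable_affine[OF integrable_gaussian, of c 0]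
          integrable_norm[OF int_u]] by simp
    show "(\<lambda>(\<xi>, y). K \<xi> y) \<in> borel_measurable (lborel \<Otimes>\<^sub>M lborel)"
      unfolding K_def by measurable
    show "AE p in lborel \<Otimes>\<^sub>M lborel. norm (case p of (\<xi>, y) \<Rightarrow> K \<xi> y) \<le> norm (gaussian (0 + c *\<^sub>R fst p) * norm (u (snd p)))"
      by (intro AE_I2) (auto simp: K_def norm_mult norm_exp_i_times less_imp_le[OF gaussian_pos])
  qed
  have inner_K: "(\<integral>\<xi>. K \<xi> y \<partial>lborel) = u y * complex_of_real ((sqrt (2*pi) / c) ^ 3 * gaussian ((1/c) *\<^sub>R (y - x)))"
    for y
  proof -
    have "(y - x) \<bullet> \<xi> = - (x \<bullet> \<xi>) + y \<bullet> \<xi>" for \<xi>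
      by (simp add: inner_diff_left)
    then have phase: "iexp (- (x \<bullet> \<xi>)) * iexp (y \<bullet> \<xi>) = iexp ((y - x) \<bullet> \<xi>)" for \<xi>
      by (simp only: iexp_add)
    have "(\<integral>\<xi>. K \<xi> y \<partial>lborel)
        = (\<integral>\<xi>. u y * (complex_of_real (gaussian (c *\<^sub>R \<xi>)) * iexp ((y - x) \<bullet> \<xi>)) \<partial>lborel)"
      by (rule Bochner_Integration.integral_cong) (simp_all add: K_def phase[symmetric] mult_ac)
    also have "\<dots> = u y * complex_of_real ((sqrt (2*pi) / c) ^ 3 * gaussian ((1/c) *\<^sub>R (y - x)))"
      using fourier_gaussian_scaled[OF c, of "y - x"] by simp
    finally show ?thesis .
  qed
  have "(\<integral>\<xi>. complex_of_real (gaussian (c *\<^sub>R \<xi>)) * (iexp (- (x \<bullet> \<xi>)) * fourier u \<xi>) \<partial>lborel)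
      = (\<integral>\<xi>. (\<integral>y. K \<xi> y \<partial>lborel) \<partial>lborel)"
    by (rule Bochner_Integration.integral_cong) (simp_all add: K_def fourier_def mult.assoc)
  also have "\<dots> = (\<integral>y. (\<integral>\<xi>. K \<xi> y \<partial>lborel) \<partial>lborel)"
    using lborel_pair.Fubini_integral[OF int_K] by simp
  also have "\<dots> = (\<integral>y. u y * complex_of_real ((sqrt (2*pi) / c) ^ 3 * gaussian ((1/c) *\<^sub>R (y - x))) \<partial>lborel)"
    by (simp only: inner_K)
  also have "\<dots> = complex_of_real (sqrt (2*pi) ^ 3) * (\<integral>w. u (x + c *\<^sub>R w) * complex_of_real (gaussian w) \<partial>lborel)"
    using integral_gaussian_kernel[OF c, of u x] by simp
  finally show ?thesis .
qed

theorem fourier_inversion: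
  fixes u :: "R3 \<Rightarrow> complex"
  assumes cont_u: "continuous_on UNIV u" and bounded_u: "\<And>x. norm (u x) \<le> B"
    and int_u: "integrable lborel u" and int_fourier: "integrable lborel (fourier u)"
  shows "fourier_inv (fourier u) x = u x"
proof -
  define s where "s = complex_of_real (sqrt (2*pi) ^ 3)"
  define L where "L = (\<integral>\<xi>. iexp (- (x \<bullet> \<xi>)) * fourier u \<xi> \<partial>lborel)"
  have lim_damped: "((\<lambda>c. \<integral>\<xi>. complex_of_real (gaussian (c *\<^sub>R \<xi>)) * (iexp (- (x \<bullet> \<xi>)) * fourier u \<xi>) \<partial>lborel)
      \<longlongrightarrow> L) (at_right 0)"
    unfolding L_def by (intro tendsto_integral_gaussian_damped integrable_iexp_mult int_fourier) simp
  have lim_mean: "((\<lambda>c. s * (\<integral>w. u (x + c *\<^sub>R w) * complex_of_real (gaussian w) \<partial>lborel))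
      \<longlongrightarrow> s * (s * u x)) (at_right 0)"
    using tendsto_integral_gaussian_mean[OF cont_u bounded_u, of x] by (intro tendsto_mult_left) (simp add: s_def)
  have "\<forall>\<^sub>F c in at_right 0.
      s * (\<integral>w. u (x + c *\<^sub>R w) * complex_of_real (gaussian w) \<partial>lborel)
      = (\<integral>\<xi>. complex_of_real (gaussian (c *\<^sub>R \<xi>)) * (iexp (- (x \<bullet> \<xi>)) * fourier u \<xi>) \<partial>lborel)"
    using eventually_at_right_less[of "0::real"]
    by eventually_elim (simp only: s_def fourier_inv_gaussian_regularized[OF int_u])
  from Lim_transform_eventually[OF lim_mean this]
  have L: "L = s * (s * u x)"
    by (rule tendsto_unique[OF trivial_limit_at_right_real lim_damped])
  have unit: "complex_of_real ((2*pi) powr (-3)) * (s * s) = 1"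
  proof -
    have "sqrt (2*pi) ^ 3 * sqrt (2*pi) ^ 3 = (2*pi) ^ 3"
      by (simp add: power_mult_distrib[symmetric])
    moreover have "(2*pi) powr (-3) * (2*pi) ^ 3 = 1"
      by (simp add: powr_minus powr_numeral)
    ultimately have "(2*pi) powr (-3) * (sqrt (2*pi) ^ 3 * sqrt (2*pi) ^ 3) = 1"
      by simp
    then show ?thesis
      unfolding s_def by (metis of_real_1 of_real_mult)
  qed
  have "fourier_inv (fourier u) x = complex_of_real ((2*pi) powr (-3)) * L"
    by (simp add: fourier_inv_def L_def)
  also have "\<dots> = (complex_of_real ((2*pi) powr (-3)) * (s * s)) * u x"
    by (simp only: L mult.assoc)
  also have "\<dots> = u x"
    by (simp only: unit mult_1_left)
  finally show ?thesis .
qed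

corollary fourier_inversion_schwartz:
  assumes "schwartz u"
  shows "fourier_inv (fourier u) = u"
proof
  fix x
  obtain B where "\<And>x. (1 + norm x) ^ 0 * norm (pdiffs [] u x) \<le> B"
    using schwartz_decay[OF assms] by blast
  then show "fourier_inv (fourier u) x = u x"
    using schwartz_continuous[OF assms, of "[]"] schwartz_integrable[OF assms, of "[]"]
      integrable_fourier_schwartz[OF assms]
    by (intro fourier_inversion[where B = B]) simp_all
qed

section \<open>The operators S, P and Q on Fourier transforms\<close>

lemma iexp_minus_diff: "iexp (- y) - iexp y = - 2 * \<i> * complex_of_real (sin y)"
proof -
  have "iexp (- y) = cis (- y)" "iexp y = cis y"
    by (simp_all add: cis_conv_exp)
  then show ?thesis
    by (simp add: complex_eq_iff)
qed

lemma tendsto_Si_truncated: "((\<lambda>e. Si (a / e) - Si (a * e)) \<longlongrightarrow> sgn a * (pi / 2)) (at_right 0)"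
proof -
  have "((\<lambda>e. Si (a * e)) \<longlongrightarrow> Si (a * 0)) (at_right 0)"
    by (intro isCont_tendsto_compose[OF isCont_Si] tendsto_intros)
  then have lim_inner: "((\<lambda>e. Si (a * e)) \<longlongrightarrow> 0) (at_right 0)"
    by (simp add: Si_def zero_ereal_def)
  have to_top: "filterlim (\<lambda>e. b / e) at_top (at_right 0)" if "b > 0" for b :: real
    using filterlim_tendsto_pos_mult_at_top[OF tendsto_const that filterlim_inverse_at_top_right]
    by (simp add: divide_inverse)
  have "((\<lambda>e. Si (a / e)) \<longlongrightarrow> sgn a * (pi / 2)) (at_right 0)"
  proof (cases a "0::real" rule: linorder_cases)
    case less
    have "((\<lambda>e. - Si ((- a) / e)) \<longlongrightarrow> - (pi / 2)) (at_right 0)"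
      using filterlim_compose[OF Si_at_top to_top[of "- a"]] less by (intro tendsto_minus) simp
    moreover have "\<forall>\<^sub>F e in at_right 0. - Si ((- a) / e) = Si (a / e)"
      using eventually_at_right_less[of "0::real"]
      by eventually_elim (use less in \<open>simp add: Si_neg[symmetric] divide_nonpos_pos\<close>)
    ultimately show ?thesis
      using less by (simp add: Lim_transform_eventually)
  next
    case equal
    then show ?thesis
      by (simp add: Si_def zero_ereal_def)
  next
    case greater
    then show ?thesis
      using filterlim_compose[OF Si_at_top to_top[of a]] by simp
  qed
  then show ?thesis
    using tendsto_diff[OF _ lim_inner] by simp
qed

lemma bounded_Si_truncated: "\<exists>B. \<forall>a e. \<bar>Si (a / e) - Si (a * e)\<bar> \<le> B"
proof -
  obtain B where B: "\<And>T. \<bar>Si T\<bar> \<le> B"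
    using bounded_Si by blast
  have "\<bar>Si (a / e) - Si (a * e)\<bar> \<le> 2 * B" for a e
    using B[of "a / e"] B[of "a * e"] by linarith
  then show ?thesis
    by blast
qed

lemma integral_sin_over_truncated:
  assumes e: "0 < e" "e < 1"
  shows "(\<integral>t. indicator {e<..<1/e} t * (sin (t * a) / t) \<partial>lborel) = Si (a / e) - Si (a * e)"
proof -
  have le: "e \<le> 1 / e" using e by (simp add: field_simps) (smt (verit) mult_le_one)
  have D: "((\<lambda>t. Si (a * t)) has_vector_derivative (a * sinc (a * t))) (at t within X)" for t X
  proof -
    have "((\<lambda>t. Si (a * t)) has_real_derivative (sinc (a * t) * a)) (at t within X)"
      by (rule DERIV_chain2[OF DERIV_Si]) (auto intro!: derivative_eq_intros)
    then show ?thesis by (simp add: has_real_derivative_iff_has_vector_derivative mult.commute)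
  qed
  have c: "continuous_on {min e (1/e)..max e (1/e)} (\<lambda>t. a * sinc (a * t))"
    by (intro continuous_intros)
  have "(LBINT t=e..1/e. a * sinc (a * t)) = Si (a * (1/e)) - Si (a * e)"
    by (rule interval_integral_FTC_finite[OF c D])
  moreover have "(LBINT t=e..1/e. a * sinc (a * t)) = (LBINT t=e..1/e. sin (t * a) / t)"
  proof (rule interval_integral_cong)
    fix t assume "t \<in> einterval (min (ereal e) (ereal (1/e))) (max (ereal e) (ereal (1/e)))"
    then have "t > 0" using e le by (auto simp: einterval_iff min_def max_def)
    then show "a * sinc (a * t) = sin (t * a) / t" by (auto simp: mult.commute)
  qed
  moreover have "(LBINT t=e..1/e. sin (t * a) / t) = (\<integral>t. indicator {e<..<1/e} t * (sin (t * a) / t) \<partial>lborel)"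
    using le by (simp add: interval_integral_Ioo set_lebesgue_integral_def)
  ultimately show ?thesis by simp
qed

lemma integral_symmetric_truncation:
  fixes h :: "real \<Rightarrow> complex"
  assumes cont: "continuous_on (- {0}) h" and e: "0 < e" "e < 1"
  shows "(\<integral>t. indicator {t. e < \<bar>t\<bar> \<and> \<bar>t\<bar> < 1/e} t *\<^sub>R h t \<partial>lborel)
      = (\<integral>t. indicator {e<..<1/e} t *\<^sub>R (h t + h (- t)) \<partial>lborel)"
proof -
  define P where "P = {e<..<1/e}"
  define N where "N = {-(1/e)<..<-e}"
  have split: "indicator {t. e < \<bar>t\<bar> \<and> \<bar>t\<bar> < 1/e} t = (indicator P t + indicator N t :: real)" for t
    using e by (auto simp: indicator_def P_def N_def abs_if)
  have reflect: "indicator N (- t) = (indicator P t :: real)" for t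
    by (auto simp: indicator_def P_def N_def)
  have cont_interval: "continuous_on {x..y} h" if "0 < x \<or> y < 0" for x y
    using that by (intro continuous_on_subset[OF cont]) auto
  have int_P: "set_integrable lborel P h"
    by (rule set_integrable_subset[OF borel_integrable_atLeastAtMost'[OF cont_interval[of e "1/e"]]])
       (use e in \<open>auto simp: P_def\<close>)
  have int_N: "set_integrable lborel N h"
    by (rule set_integrable_subset[OF borel_integrable_atLeastAtMost'[OF cont_interval[of "-(1/e)" "-e"]]])
       (use e in \<open>auto simp: N_def\<close>)
  have int_P': "integrable lborel (\<lambda>t. indicator P t *\<^sub>R h (- t))"
    using lborel_integrable_real_affine[of "\<lambda>t. indicator N t *\<^sub>R h t" "-1" 0] int_N
    by (simp add: set_integrable_def reflect)
  have "(\<integral>t. indicator {t. e < \<bar>t\<bar> \<and> \<bar>t\<bar> < 1/e} t *\<^sub>R h t \<partial>lborel)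
      = (\<integral>t. indicator P t *\<^sub>R h t \<partial>lborel) + (\<integral>t. indicator N t *\<^sub>R h t \<partial>lborel)"
    using int_P int_N unfolding set_integrable_def split scaleR_add_left by (rule Bochner_Integration.integral_add)
  also have "(\<integral>t. indicator N t *\<^sub>R h t \<partial>lborel) = (\<integral>t. indicator P t *\<^sub>R h (- t) \<partial>lborel)"
    using lborel_integral_real_affine[of "-1" "\<lambda>t. indicator N t *\<^sub>R h t" 0] by (simp add: reflect)
  also have "(\<integral>t. indicator P t *\<^sub>R h t \<partial>lborel) + \<dots> = (\<integral>t. indicator P t *\<^sub>R (h t + h (- t)) \<partial>lborel)"
    using int_P int_P' unfolding set_integrable_def scaleR_add_right by (rule Bochner_Integration.integral_add[symmetric])
  finally show ?thesis
    unfolding P_def .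
qed

lemma integral_truncated_hilbert_kernel:
  assumes e: "0 < e" "e < 1"
  shows "(\<integral>t. indicator {t. e < \<bar>t\<bar> \<and> \<bar>t\<bar> < 1/e} t *\<^sub>R (iexp (- (t * a)) / complex_of_real t) \<partial>lborel)
       = - 2 * \<i> * complex_of_real (Si (a / e) - Si (a * e))"
proof -
  have "continuous_on (- {0}) (\<lambda>t. iexp (- (t * a)) / complex_of_real t)"
    by (intro continuous_intros) auto
  then have "(\<integral>t. indicator {t. e < \<bar>t\<bar> \<and> \<bar>t\<bar> < 1/e} t *\<^sub>R (iexp (- (t * a)) / complex_of_real t) \<partial>lborel)
      = (\<integral>t. indicator {e<..<1/e} t *\<^sub>R ((iexp (- (t * a)) - iexp (t * a)) / complex_of_real t) \<partial>lborel)"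
    by (simp add: integral_symmetric_truncation[OF _ e] diff_divide_distrib)
  also have "\<dots> = (\<integral>t. - 2 * \<i> * complex_of_real (indicator {e<..<1/e} t * (sin (t * a) / t)) \<partial>lborel)"
  proof (rule Bochner_Integration.integral_cong[OF refl])
    fix t
    have "(iexp (- (t * a)) - iexp (t * a)) / complex_of_real t = - 2 * \<i> * complex_of_real (sin (t * a) / t)"
      unfolding iexp_minus_diff by simp
    then show "indicator {e<..<1/e} t *\<^sub>R ((iexp (- (t * a)) - iexp (t * a)) / complex_of_real t)
        = - 2 * \<i> * complex_of_real (indicator {e<..<1/e} t * (sin (t * a) / t))"
      by (simp only: scaleR_conv_of_real of_real_mult mult_ac)
  qed
  also have "\<dots> = - 2 * \<i> * complex_of_real (Si (a / e) - Si (a * e))"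
    by (simp only: integral_mult_right_zero integral_complex_of_real integral_sin_over_truncated[OF e])
  finally show ?thesis .
qed

lemma norm_truncated_kernel_le:
  assumes e: "0 < e"
  shows "norm (indicator {t. e < \<bar>t\<bar> \<and> \<bar>t\<bar> < 1/e} t *\<^sub>R (z / complex_of_real t))
      \<le> indicator {-(1/e)..1/e} t * norm z / e"
proof (cases "e < \<bar>t\<bar> \<and> \<bar>t\<bar> < 1/e")
  case True
  then have "indicator {-(1/e)..1/e} t = (1::real)"
    by (auto simp: indicator_def abs_less_iff)
  moreover have "norm z / \<bar>t\<bar> \<le> norm z / e"
    using True e by (intro divide_left_mono) auto
  ultimately show ?thesis
    using True by (simp add: norm_divide)
qed (use e in simp)

lemma integral_truncated_kernel_fourier:
  fixes g :: "R3 \<Rightarrow> complex"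
  assumes int_g: "integrable lborel g" and e: "0 < e"
  defines "A t \<equiv> (indicator {t. e < \<bar>t\<bar> \<and> \<bar>t\<bar> < 1/e} t :: real)"
  shows "(\<integral>t. A t *\<^sub>R (fourier g (\<xi> - t *\<^sub>R axis j 1) / complex_of_real t) \<partial>lborel)
      = (\<integral>x. iexp (x \<bullet> \<xi>) * g x * (\<integral>t. A t *\<^sub>R (iexp (- (t * x$j)) / complex_of_real t) \<partial>lborel) \<partial>lborel)"
proof -
  have [measurable]: "g \<in> borel_measurable borel" "A \<in> borel_measurable borel"
    using int_g unfolding A_def[abs_def] by auto
  define \<Phi> where "\<Phi> t x = A t *\<^sub>R (iexp (x \<bullet> \<xi>) * g x * iexp (- (t * x$j)) / complex_of_real t)" for t x
  have int_bound: "integrable lborel (\<lambda>t. indicator {-(1/e)..1/e} t *\<^sub>R (1/e))"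
    using borel_integrable_atLeastAtMost'[of "-(1/e)" "1/e" "\<lambda>_. 1/e"] unfolding set_integrable_def by simp
  have norm_\<Phi>: "norm (\<Phi> t x) \<le> indicator {-(1/e)..1/e} t *\<^sub>R (1/e) * norm (g x)" for t x
    using norm_truncated_kernel_le[OF e, of t "iexp (x \<bullet> \<xi>) * g x * iexp (- (t * x$j))"]
    by (simp add: \<Phi>_def A_def norm_mult norm_exp_i_times)
  have int_\<Phi>: "integrable (lborel \<Otimes>\<^sub>M lborel) (\<lambda>(t, x). \<Phi> t x)"
  proof (rule Bochner_Integration.integrable_bound)
    show "integrable (lborel \<Otimes>\<^sub>M lborel) (\<lambda>p. (indicator {-(1/e)..1/e} (fst p) *\<^sub>R (1/e)) * norm (g (snd p)))"
      by (rule integrable_pair_lborel_mult[OF int_bound integrable_norm[OF int_g]])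
    show "(\<lambda>(t, x). \<Phi> t x) \<in> borel_measurable (lborel \<Otimes>\<^sub>M lborel)"
      unfolding \<Phi>_def by measurable
    show "AE p in lborel \<Otimes>\<^sub>M lborel. norm (case p of (t, x) \<Rightarrow> \<Phi> t x)
        \<le> norm (indicator {-(1/e)..1/e} (fst p) *\<^sub>R (1/e) * norm (g (snd p)))"
      using norm_\<Phi> e by (intro AE_I2) (auto simp: split_beta)
  qed
  have fourier_shift: "fourier g (\<xi> - t *\<^sub>R axis j 1) = (\<integral>x. iexp (x \<bullet> \<xi>) * g x * iexp (- (t * x$j)) \<partial>lborel)" for t
  proof -
    have "x \<bullet> (\<xi> - t *\<^sub>R axis j 1) = x \<bullet> \<xi> + (- (t * x$j))" for x
      by (simp add: inner_diff_right inner_axis)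
    then show ?thesis
      unfolding fourier_def by (simp only: iexp_add mult_ac)
  qed
  have inner_\<Phi>: "(\<integral>t. \<Phi> t x \<partial>lborel)
      = iexp (x \<bullet> \<xi>) * g x * (\<integral>t. A t *\<^sub>R (iexp (- (t * x$j)) / complex_of_real t) \<partial>lborel)" for x
  proof -
    have "(\<integral>t. \<Phi> t x \<partial>lborel)
        = (\<integral>t. iexp (x \<bullet> \<xi>) * g x * (A t *\<^sub>R (iexp (- (t * x$j)) / complex_of_real t)) \<partial>lborel)"
      by (rule Bochner_Integration.integral_cong[OF refl]) (simp add: \<Phi>_def scaleR_conv_of_real mult_ac)
    then show ?thesis
      by (simp only: integral_mult_right_zero)
  qed
  have "(\<integral>t. A t *\<^sub>R (fourier g (\<xi> - t *\<^sub>R axis j 1) / complex_of_real t) \<partial>lborel)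
      = (\<integral>t. (\<integral>x. \<Phi> t x \<partial>lborel) \<partial>lborel)"
    by (simp add: fourier_shift \<Phi>_def)
  also have "\<dots> = (\<integral>x. (\<integral>t. \<Phi> t x \<partial>lborel) \<partial>lborel)"
    using lborel_pair.Fubini_integral[OF int_\<Phi>] by simp
  finally show ?thesis
    by (simp only: inner_\<Phi>)
qed

lemma truncated_pv_fourier:
  fixes g :: "R3 \<Rightarrow> complex"
  assumes int_g: "integrable lborel g" and e: "0 < e" "e < 1"
  shows "(\<integral>\<eta>. indicator {\<eta>. e < \<bar>\<xi>$j - \<eta>\<bar> \<and> \<bar>\<xi>$j - \<eta>\<bar> < 1 / e} \<eta> *\<^sub>R
          (fourier g (\<xi> + (\<eta> - \<xi>$j) *\<^sub>R axis j 1) / complex_of_real (\<xi>$j - \<eta>)) \<partial>lborel)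
      = (\<integral>x. iexp (x \<bullet> \<xi>) * g x * (- 2 * \<i> * complex_of_real (Si (x$j / e) - Si (x$j * e))) \<partial>lborel)"
proof -
  have "(\<integral>\<eta>. indicator {\<eta>. e < \<bar>\<xi>$j - \<eta>\<bar> \<and> \<bar>\<xi>$j - \<eta>\<bar> < 1 / e} \<eta> *\<^sub>R
          (fourier g (\<xi> + (\<eta> - \<xi>$j) *\<^sub>R axis j 1) / complex_of_real (\<xi>$j - \<eta>)) \<partial>lborel)
      = \<bar>-1\<bar> *\<^sub>R (\<integral>t. indicator {\<eta>. e < \<bar>\<xi>$j - \<eta>\<bar> \<and> \<bar>\<xi>$j - \<eta>\<bar> < 1 / e} (\<xi>$j + (-1) * t) *\<^sub>R
          (fourier g (\<xi> + ((\<xi>$j + (-1) * t) - \<xi>$j) *\<^sub>R axis j 1) / complex_of_real (\<xi>$j - (\<xi>$j + (-1) * t))) \<partial>lborel)"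
    by (rule lborel_integral_real_affine) simp
  also have "\<dots> = (\<integral>t. indicator {t. e < \<bar>t\<bar> \<and> \<bar>t\<bar> < 1/e} t *\<^sub>R
      (fourier g (\<xi> - t *\<^sub>R axis j 1) / complex_of_real t) \<partial>lborel)"
    by (simp add: indicator_def)
  also have "\<dots> = (\<integral>x. iexp (x \<bullet> \<xi>) * g x * (- 2 * \<i> * complex_of_real (Si (x$j / e) - Si (x$j * e))) \<partial>lborel)"
    by (simp only: integral_truncated_kernel_fourier[OF int_g e(1)] integral_truncated_hilbert_kernel[OF e])
  finally show ?thesis .
qed

lemma tendsto_truncated_pv_fourier:
  fixes g :: "R3 \<Rightarrow> complex"
  assumes int_g: "integrable lborel g"
  shows "((\<lambda>e. \<integral>\<eta>. indicator {\<eta>. e < \<bar>\<xi>$j - \<eta>\<bar> \<and> \<bar>\<xi>$j - \<eta>\<bar> < 1 / e} \<eta> *\<^sub>R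
          (fourier g (\<xi> + (\<eta> - \<xi>$j) *\<^sub>R axis j 1) / complex_of_real (\<xi>$j - \<eta>)) \<partial>lborel)
      \<longlongrightarrow> - \<i> * complex_of_real pi * fourier (\<lambda>x. complex_of_real (sgn (x$j)) * g x) \<xi>) (at_right 0)"
proof -
  have [measurable]: "g \<in> borel_measurable borel"
    using int_g by auto
  define H where "H e x = iexp (x \<bullet> \<xi>) * g x * (- 2 * \<i> * complex_of_real (Si (x$j / e) - Si (x$j * e)))"
    for e x
  define F where "F x = iexp (x \<bullet> \<xi>) * g x * (- 2 * \<i> * complex_of_real (sgn (x$j) * (pi / 2)))" for x
  obtain B where B: "\<And>a e. \<bar>Si (a / e) - Si (a * e)\<bar> \<le> B"
    using bounded_Si_truncated by blast
  have "((\<lambda>e. integral\<^sup>L lborel (H e)) \<longlongrightarrow> integral\<^sup>L lborel F) (at_right 0)"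
  proof (rule integral_dominated_convergence_at_right_0[where w = "\<lambda>x. 2 * B * norm (g x)"])
    show "integrable lborel (\<lambda>x. 2 * B * norm (g x))"
      using int_g by simp
    show "F \<in> borel_measurable lborel"
      unfolding F_def by measurable
    show "H e \<in> borel_measurable lborel" for e
      unfolding H_def by measurable
    show "((\<lambda>e. H e x) \<longlongrightarrow> F x) (at_right 0)" for x
      unfolding H_def F_def by (intro tendsto_intros tendsto_Si_truncated)
    show "norm (H e x) \<le> 2 * B * norm (g x)" for e x
      using mult_left_mono[OF B[of "x$j" e] norm_ge_zero[of "g x"]]
      by (simp add: H_def norm_mult norm_exp_i_times mult.commute del: of_real_diff)
  qed
  moreover have "\<forall>\<^sub>F e in at_right 0. integral\<^sup>L lborel (H e)
      = (\<integral>\<eta>. indicator {\<eta>. e < \<bar>\<xi>$j - \<eta>\<bar> \<and> \<bar>\<xi>$j - \<eta>\<bar> < 1 / e} \<eta> *\<^sub>R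
          (fourier g (\<xi> + (\<eta> - \<xi>$j) *\<^sub>R axis j 1) / complex_of_real (\<xi>$j - \<eta>)) \<partial>lborel)"
  proof -
    have "\<forall>\<^sub>F e in at_right (0::real). 0 < e \<and> e < 1"
      unfolding eventually_at_right_field by (intro exI[of _ 1]) auto
    then show ?thesis
      by eventually_elim (elim conjE, simp only: H_def[abs_def] truncated_pv_fourier[OF int_g])
  qed
  moreover have "integral\<^sup>L lborel F = - \<i> * complex_of_real pi * fourier (\<lambda>x. complex_of_real (sgn (x$j)) * g x) \<xi>"
    unfolding fourier_def F_def by (simp add: mult_ac)
  ultimately show ?thesis
    by (simp add: Lim_transform_eventually)
qed

lemma S1_fourier:
  assumes "integrable lborel g"
  shows "S1 (fourier g) \<xi> = fourier (\<lambda>x. complex_of_real (sgn (x$1)) * g x) \<xi>"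
proof -
  have "vector [\<eta>, \<xi>$2, \<xi>$3] = \<xi> + (\<eta> - \<xi>$1) *\<^sub>R axis 1 1" for \<eta>
    by (simp add: R3_eq_iff axis_def)
  then have "pv_integral (\<lambda>\<eta>. fourier g (vector [\<eta>, \<xi>$2, \<xi>$3]) / complex_of_real (\<xi>$1 - \<eta>)) (\<xi>$1)
      = - \<i> * complex_of_real pi * fourier (\<lambda>x. complex_of_real (sgn (x$1)) * g x) \<xi>"
    unfolding pv_integral_def
    by (simp only: tendsto_Lim[OF trivial_limit_at_right_real tendsto_truncated_pv_fourier[OF assms]])
  then show ?thesis
    unfolding S1_def by simp
qed

lemma S2_fourier:
  assumes "integrable lborel g"
  shows "S2 (fourier g) \<xi> = fourier (\<lambda>x. complex_of_real (sgn (x$2)) * g x) \<xi>"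
proof -
  have "vector [\<xi>$1, \<eta>, \<xi>$3] = \<xi> + (\<eta> - \<xi>$2) *\<^sub>R axis 2 1" for \<eta>
    by (simp add: R3_eq_iff axis_def)
  then have "pv_integral (\<lambda>\<eta>. fourier g (vector [\<xi>$1, \<eta>, \<xi>$3]) / complex_of_real (\<xi>$2 - \<eta>)) (\<xi>$2)
      = - \<i> * complex_of_real pi * fourier (\<lambda>x. complex_of_real (sgn (x$2)) * g x) \<xi>"
    unfolding pv_integral_def
    by (simp only: tendsto_Lim[OF trivial_limit_at_right_real tendsto_truncated_pv_fourier[OF assms]])
  then show ?thesis
    unfolding S2_def by simp
qed

text \<open>The value \<open>1/2\<close> at the origin makes \<open>heaviside t + heaviside (- t) = 1\<close> hold everywhere,
  matching \<open>P\<^sub>k + Q\<^sub>k = I\<close>.\<close>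

definition heaviside :: "real \<Rightarrow> real" where
  "heaviside t = (1 + sgn t) / 2"

lemma heaviside_measurable [measurable]: "heaviside \<in> borel_measurable borel"
  unfolding heaviside_def by measurable

lemma norm_heaviside_le: "norm (complex_of_real (heaviside t)) \<le> 1"
  by (simp add: heaviside_def sgn_real_def)

lemma fourier_heaviside_mult:
  assumes int_g: "integrable lborel g"
  shows "(fourier g \<xi> + fourier (\<lambda>x. complex_of_real (sgn (x$j)) * g x) \<xi>) / 2
      = fourier (\<lambda>x. complex_of_real (heaviside (x$j)) * g x) \<xi>"
    and "(fourier g \<xi> - fourier (\<lambda>x. complex_of_real (sgn (x$j)) * g x) \<xi>) / 2
      = fourier (\<lambda>x. complex_of_real (heaviside (- x$j)) * g x) \<xi>"
proof -
  have int_sgn: "integrable lborel (\<lambda>x. complex_of_real (s * sgn (x$j)) * g x)" for s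
    by (rule integrable_bounded_mult[OF int_g, of _ "\<bar>s\<bar>"]) (simp_all add: abs_mult sgn_real_def)
  have split: "fourier g \<xi> + fourier (\<lambda>x. complex_of_real (s * sgn (x$j)) * g x) \<xi>
      = 2 * fourier (\<lambda>x. complex_of_real (heaviside (s * x$j)) * g x) \<xi>" if "s = 1 \<or> s = -1" for s
  proof -
    have "fourier g \<xi> + fourier (\<lambda>x. complex_of_real (s * sgn (x$j)) * g x) \<xi>
        = fourier (\<lambda>x. g x + complex_of_real (s * sgn (x$j)) * g x) \<xi>"
      by (rule fourier_add[OF int_g int_sgn, symmetric])
    also have "(\<lambda>x. g x + complex_of_real (s * sgn (x$j)) * g x)
        = (\<lambda>x. 2 * (complex_of_real (heaviside (s * x$j)) * g x))"
      using that by (auto simp: fun_eq_iff heaviside_def sgn_minus field_simps)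
    also have "fourier \<dots> \<xi> = 2 * fourier (\<lambda>x. complex_of_real (heaviside (s * x$j)) * g x) \<xi>"
      by (rule fourier_cmult)
    finally show ?thesis .
  qed
  have "fourier (\<lambda>x. complex_of_real (- 1 * sgn (x$j)) * g x) \<xi> = - fourier (\<lambda>x. complex_of_real (sgn (x$j)) * g x) \<xi>"
    by (simp add: fourier_def)
  then show "(fourier g \<xi> + fourier (\<lambda>x. complex_of_real (sgn (x$j)) * g x) \<xi>) / 2
      = fourier (\<lambda>x. complex_of_real (heaviside (x$j)) * g x) \<xi>"
    "(fourier g \<xi> - fourier (\<lambda>x. complex_of_real (sgn (x$j)) * g x) \<xi>) / 2
      = fourier (\<lambda>x. complex_of_real (heaviside (- x$j)) * g x) \<xi>"
    using split[of 1] split[of "-1"] by simp_all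
qed

lemma
  assumes "integrable lborel g"
  shows P1_fourier: "P1 (fourier g) = fourier (\<lambda>x. complex_of_real (heaviside (x$1)) * g x)"
    and Q1_fourier: "Q1 (fourier g) = fourier (\<lambda>x. complex_of_real (heaviside (- x$1)) * g x)"
    and P2_fourier: "P2 (fourier g) = fourier (\<lambda>x. complex_of_real (heaviside (x$2)) * g x)"
    and Q2_fourier: "Q2 (fourier g) = fourier (\<lambda>x. complex_of_real (heaviside (- x$2)) * g x)"
  using fourier_heaviside_mult[OF assms]
  by (simp_all add: fun_eq_iff P1_def Q1_def P2_def Q2_def S1_fourier[OF assms] S2_fourier[OF assms])

lemma quadrant_projections_fourier:
  assumes "integrable lborel u"
  shows "P1 (P2 (fourier u)) = fourier (\<lambda>x. complex_of_real (heaviside (x$1) * heaviside (x$2)) * u x)"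
    and "Q1 (P2 (fourier u)) = fourier (\<lambda>x. complex_of_real (heaviside (- x$1) * heaviside (x$2)) * u x)"
    and "Q1 (Q2 (fourier u)) = fourier (\<lambda>x. complex_of_real (heaviside (- x$1) * heaviside (- x$2)) * u x)"
    and "P1 (Q2 (fourier u)) = fourier (\<lambda>x. complex_of_real (heaviside (x$1) * heaviside (- x$2)) * u x)"
proof -
  have "integrable lborel (\<lambda>x. complex_of_real (heaviside (s * x$2)) * u x)" for s
    by (rule integrable_bounded_mult[OF assms _ norm_heaviside_le]) simp
  from this[of 1] this[of "-1"] show
    "P1 (P2 (fourier u)) = fourier (\<lambda>x. complex_of_real (heaviside (x$1) * heaviside (x$2)) * u x)"
    "Q1 (P2 (fourier u)) = fourier (\<lambda>x. complex_of_real (heaviside (- x$1) * heaviside (x$2)) * u x)"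
    "Q1 (Q2 (fourier u)) = fourier (\<lambda>x. complex_of_real (heaviside (- x$1) * heaviside (- x$2)) * u x)"
    "P1 (Q2 (fourier u)) = fourier (\<lambda>x. complex_of_real (heaviside (x$1) * heaviside (- x$2)) * u x)"
    by (simp_all add: P2_fourier[OF assms] Q2_fourier[OF assms] P1_fourier Q1_fourier mult.assoc)
qed

section \<open>Splitting T_phi along the quadrants\<close>

lemma heaviside_split_max:
  fixes h :: "real \<Rightarrow> complex"
  assumes "a > 0" "c > 0"
  shows "complex_of_real (heaviside y) * h (a * y) + complex_of_real (heaviside (- y)) * h (- c * y)
      = h (max (a * y) (- c * y))"
proof (cases y "0::real" rule: linorder_cases)
  case less
  then have "a * y < 0" "0 < - c * y"
    using assms by (simp_all add: mult_pos_neg)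
  then have "max (a * y) (- c * y) = - c * y"
    by simp
  then show ?thesis
    using less by (simp add: heaviside_def)
next
  case greater
  then have "0 < a * y" "- c * y < 0"
    using assms by simp_all
  then have "max (a * y) (- c * y) = a * y"
    by simp
  then show ?thesis
    using greater by (simp add: heaviside_def)
qed (simp add: heaviside_def field_simps)

lemma T_phi_quadrants:
  assumes "a > 0" "b > 0" "c > 0" "d > 0"
  shows "T_phi a b c d u x =
      complex_of_real (heaviside (x$1) * heaviside (x$2)) * u (shear (-a) (-b) x)
    + complex_of_real (heaviside (- x$1) * heaviside (x$2)) * u (shear c (-b) x)
    + complex_of_real (heaviside (- x$1) * heaviside (- x$2)) * u (shear c d x)
    + complex_of_real (heaviside (x$1) * heaviside (- x$2)) * u (shear (-a) d x)"
proof -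
  define h where "h s = u (vector [x$1, x$2, x$3 - s])" for s
  have shear_h: "u (shear \<alpha> \<beta> x) = h (- \<alpha> * x$1 + - \<beta> * x$2)" for \<alpha> \<beta>
  proof -
    have "shear \<alpha> \<beta> x = vector [x$1, x$2, x$3 - (- \<alpha> * x$1 + - \<beta> * x$2)]"
      by (simp add: shear_def R3_eq_iff axis_def)
    then show ?thesis
      by (simp only: h_def)
  qed
  define m where "m = max (a * x$1) (- c * x$1)"
  have split1: "complex_of_real (heaviside (x$1)) * h (a * x$1 + t)
      + complex_of_real (heaviside (- x$1)) * h (- c * x$1 + t) = h (m + t)" for t
    using heaviside_split_max[OF assms(1,3), of "x$1" "\<lambda>s. h (s + t)"] by (simp add: m_def)
  have split2: "complex_of_real (heaviside (x$2)) * h (m + b * x$2)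
      + complex_of_real (heaviside (- x$2)) * h (m + - d * x$2) = h (m + max (b * x$2) (- d * x$2))"
    using heaviside_split_max[OF assms(2,4), of "x$2" "\<lambda>s. h (m + s)"] by simp
  have "T_phi a b c d u x = h (m + max (b * x$2) (- d * x$2))"
    by (simp add: T_phi_def phi_def h_def m_def)
  also have "\<dots> = complex_of_real (heaviside (x$2)) * (complex_of_real (heaviside (x$1)) * h (a * x$1 + b * x$2)
        + complex_of_real (heaviside (- x$1)) * h (- c * x$1 + b * x$2))
      + complex_of_real (heaviside (- x$2)) * (complex_of_real (heaviside (x$1)) * h (a * x$1 + - d * x$2)
        + complex_of_real (heaviside (- x$1)) * h (- c * x$1 + - d * x$2))"
    unfolding split1 split2 ..
  finally show ?thesis
    by (simp add: shear_h algebra_simps)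
qed

lemma fourier_T_phi:
  assumes "a > 0" "b > 0" "c > 0" "d > 0" and int_u: "integrable lborel u"
  shows "fourier (T_phi a b c d u) \<xi> =
      fourier (\<lambda>x. complex_of_real (heaviside (x$1) * heaviside (x$2)) * u x)
        (vector [\<xi>$1 + a * \<xi>$3, \<xi>$2 + b * \<xi>$3, \<xi>$3])
    + fourier (\<lambda>x. complex_of_real (heaviside (- x$1) * heaviside (x$2)) * u x)
        (vector [\<xi>$1 - c * \<xi>$3, \<xi>$2 + b * \<xi>$3, \<xi>$3])
    + fourier (\<lambda>x. complex_of_real (heaviside (- x$1) * heaviside (- x$2)) * u x)
        (vector [\<xi>$1 - c * \<xi>$3, \<xi>$2 - d * \<xi>$3, \<xi>$3])
    + fourier (\<lambda>x. complex_of_real (heaviside (x$1) * heaviside (- x$2)) * u x)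
        (vector [\<xi>$1 + a * \<xi>$3, \<xi>$2 - d * \<xi>$3, \<xi>$3])"
proof -
  have [measurable]: "u \<in> borel_measurable borel"
    using int_u by auto
  define q where "q s t y = complex_of_real (heaviside (s * y$1) * heaviside (t * y$2)) * u y" for s t :: real and y
  have q_shear: "q s t (shear \<alpha> \<beta> x) = complex_of_real (heaviside (s * x$1) * heaviside (t * x$2)) * u (shear \<alpha> \<beta> x)"
    for s t \<alpha> \<beta> x
    by (simp add: q_def shear_def axis_def)
  have int_q: "integrable lborel (\<lambda>x. q s t (shear \<alpha> \<beta> x))" for s t \<alpha> \<beta>
    unfolding q_shear
    by (rule integrable_bounded_mult[OF integrable_shear[OF int_u], of _ 1])
       (simp_all add: heaviside_def sgn_real_def)
  have fourier_q: "fourier (\<lambda>x. q s t (shear \<alpha> \<beta> x)) \<xi>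
      = fourier (q s t) (vector [\<xi>$1 - \<alpha> * \<xi>$3, \<xi>$2 - \<beta> * \<xi>$3, \<xi>$3])" for s t \<alpha> \<beta>
    by (rule fourier_shear) (simp add: q_def)
  have "T_phi a b c d u = (\<lambda>x. q 1 1 (shear (-a) (-b) x) + q (-1) 1 (shear c (-b) x)
      + q (-1) (-1) (shear c d x) + q 1 (-1) (shear (-a) d x))"
    by (simp add: fun_eq_iff T_phi_quadrants[OF assms(1-4)] q_shear)
  then have "fourier (T_phi a b c d u) \<xi> = fourier (\<lambda>x. q 1 1 (shear (-a) (-b) x)) \<xi>
      + fourier (\<lambda>x. q (-1) 1 (shear c (-b) x)) \<xi> + fourier (\<lambda>x. q (-1) (-1) (shear c d x)) \<xi>
      + fourier (\<lambda>x. q 1 (-1) (shear (-a) d x)) \<xi>"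
    by (simp add: fourier_add int_q)
  then show ?thesis
    by (simp add: fourier_q) (simp add: q_def[abs_def])
qed

theorem lemma2:
  fixes a b c d :: real and u :: "R3 \<Rightarrow> complex"
  assumes "a > 0" "b > 0" "c > 0" "d > 0"
    and "schwartz u"
  shows "\<forall>\<xi>. V_phi a b c d (fourier u) \<xi> =
      P1 (P2 (fourier u)) (vector [\<xi>$1 + a * \<xi>$3, \<xi>$2 + b * \<xi>$3, \<xi>$3])
    + Q1 (P2 (fourier u)) (vector [\<xi>$1 - c * \<xi>$3, \<xi>$2 + b * \<xi>$3, \<xi>$3])
    + Q1 (Q2 (fourier u)) (vector [\<xi>$1 - c * \<xi>$3, \<xi>$2 - d * \<xi>$3, \<xi>$3])
    + P1 (Q2 (fourier u)) (vector [\<xi>$1 + a * \<xi>$3, \<xi>$2 - d * \<xi>$3, \<xi>$3])"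
proof
  fix \<xi> :: R3
  have int_u: "integrable lborel u"
    using schwartz_integrable[OF assms(5), of "[]"] by simp
  have "V_phi a b c d (fourier u) \<xi> = fourier (T_phi a b c d u) \<xi>"
    by (simp add: V_phi_def fourier_inversion_schwartz[OF assms(5)])
  then show "V_phi a b c d (fourier u) \<xi> =
      P1 (P2 (fourier u)) (vector [\<xi>$1 + a * \<xi>$3, \<xi>$2 + b * \<xi>$3, \<xi>$3])
    + Q1 (P2 (fourier u)) (vector [\<xi>$1 - c * \<xi>$3, \<xi>$2 + b * \<xi>$3, \<xi>$3])
    + Q1 (Q2 (fourier u)) (vector [\<xi>$1 - c * \<xi>$3, \<xi>$2 - d * \<xi>$3, \<xi>$3])
    + P1 (Q2 (fourier u)) (vector [\<xi>$1 + a * \<xi>$3, \<xi>$2 - d * \<xi>$3, \<xi>$3])"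
    by (simp only: fourier_T_phi[OF assms(1-4) int_u] quadrant_projections_fourier[OF int_u])
qed

end
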